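(* Let $k$ be a field and let $\mathsf{E}$ be a left strictly locally finite $k$-linear category. Then the contramodule forgetful functor $\Theta_\mathsf{E}$ from the category of left $\mathcal{C}_\mathsf{E}$-contramodules to the category of left $\mathsf{E}$-modules is fully faithful.
   Context: A small $k$-linear category $\mathsf{E}$ has $k$-vector spaces $\operatorname{Hom}_\mathsf{E}(x,y)$, $k$-bilinear associative composition and identities; it is assumed that $\mathrm{id}_x\neq0$ for every object $x$. A left $\mathsf{E}$-module is a $k$-linear functor $\mathsf{E}\to k\text{-Vect}$ (spaces $P(x)$ and action maps $\operatorname{Hom}_\mathsf{E}(x,y)\otimes_kP(x)\to P(y)$); morphisms are natural transformations. Write $x\preceq y$ if there are $n\ge1$ and objects $x=z_0,\dots,z_n=y$ with $\operatorname{Hom}_\mathsf{E}(z_{i-1},z_i)\neq0$ for all $i$; $x\prec y$ means $x\preceq y$ and not $y\preceq x$. $\mathsf{E}$ is locally finite if all $\operatorname{Hom}_\mathsf{E}(x,y)$ are finite-dimensional and all sets $\{z:x\preceq z\preceq y\}$ are finite. $\mathsf{E}$ is left strictly locally finite if it is locally finite and for every object $y$ there is a finite set of objects $X_y$, with $x\prec y$ for all $x\in X_y$, such that every $f:z\to y$ with $z\prec y$ equals $\sum_{i=1}^n h_ig_i$ ($n\ge0$) for some $g_i:z\to x_i$, $h_i:x_i\to y$, $x_i\in X_y$. $\mathcal{C}_\mathsf{E}=\bigoplus_{x,y}\mathcal{C}^{x,y}$, $\mathcal{C}^{x,y}=\operatorname{Hom}_\mathsf{E}(x,y)^*$, with counit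 zero on $\mathcal{C}^{x,y}$ for $x\neq y$ and evaluation at $\mathrm{id}_x$ on $\mathcal{C}^{x,x}$, and comultiplication $\mathcal{C}^{x,y}\to\bigoplus_z\mathcal{C}^{x,z}\otimes\mathcal{C}^{z,y}$ with components dual to composition $\operatorname{Hom}_\mathsf{E}(x,z)\otimes\operatorname{Hom}_\mathsf{E}(z,y)\to\operatorname{Hom}_\mathsf{E}(x,y)$, $g\otimes h\mapsto hg$. A left contramodule over a coalgebra $(\mathcal{C},\mu,\epsilon)$ is a space $\mathfrak{P}$ with $\pi:\operatorname{Hom}_k(\mathcal{C},\mathfrak{P})\to\mathfrak{P}$ such that $\pi(c\mapsto\epsilon(c)p)=p$ and, under $\operatorname{Hom}_k(\mathcal{C},\operatorname{Hom}_k(\mathcal{C},\mathfrak{P}))\cong\operatorname{Hom}_k(\mathcal{C}\otimes\mathcal{C},\mathfrak{P})$, $f\mapsto(c'\otimes c''\mapsto f(c'')(c'))$, one has $\pi(c\mapsto\pi(f(c)))=\pi(f\circ\mu)$; morphisms commute with $\pi$. For $\varphi\in\mathcal{C}^*$ set $\varphi\cdot p=\pi(c\mapsto\varphi(c)p)$. $\Theta_\mathsf{E}$: with $e_x\in\mathcal{C}_\mathsf{E}^*$ evaluation at $\mathrm{id}_x$ on $\mathcal{C}^{x,x}$ (zero elsewhere) and, for $f\in\operatorname{Hom}_\mathsf{E}(x,y)$, $\mathrm{ev}_f$ evaluation at $f$ on $\mathcal{C}^{x,y}$ (zero elsewhere), $\Theta_\mathsf{E}(\mathfrak{P})(x)=e_x\cdot\mathfrak{P}$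 (with $\mathfrak{P}\cong\prod_xe_x\cdot\mathfrak{P}$), $f$ acting by $p\mapsto\mathrm{ev}_f\cdot p$; on morphisms it takes restrictions. *)

theory Defs
  imports Complex_Main
begin

text \<open>A small k-linear category: objects of type 'o, morphisms live in a k-vector space
  of type 'm (scalar multiplication sM); Hom x y is a subspace of 'm; cmp x y z h g is the
  composite h g of g : x -> y and h : y -> z; idm x is the identity of x.\<close>

definition klin_cat ::
  "('k::field \<Rightarrow> 'm::ab_group_add \<Rightarrow> 'm) \<Rightarrow> ('o \<Rightarrow> 'o \<Rightarrow> 'm set)
   \<Rightarrow> ('o \<Rightarrow> 'o \<Rightarrow> 'o \<Rightarrow> 'm \<Rightarrow> 'm \<Rightarrow> 'm) \<Rightarrow> ('o \<Rightarrow> 'm) \<Rightarrow> bool" where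
  "klin_cat sM Hom cmp idm \<longleftrightarrow>
     vector_space sM \<and>
     (\<forall>x y. module.subspace sM (Hom x y)) \<and>
     (\<forall>x y z g h. g \<in> Hom x y \<longrightarrow> h \<in> Hom y z \<longrightarrow> cmp x y z h g \<in> Hom x z) \<and>
     (\<forall>x y z g g' h. g \<in> Hom x y \<longrightarrow> g' \<in> Hom x y \<longrightarrow> h \<in> Hom y z \<longrightarrow>
         cmp x y z h (g + g') = cmp x y z h g + cmp x y z h g') \<and>
     (\<forall>x y z g h h'. g \<in> Hom x y \<longrightarrow> h \<in> Hom y z \<longrightarrow> h' \<in> Hom y z \<longrightarrow>
         cmp x y z (h + h') g = cmp x y z h g + cmp x y z h' g) \<and>
     (\<forall>x y z g h a. g \<in> Hom x y \<longrightarrow> h \<in> Hom y z \<longrightarrow>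
         cmp x y z h (sM a g) = sM a (cmp x y z h g) \<and>
         cmp x y z (sM a h) g = sM a (cmp x y z h g)) \<and>
     (\<forall>w x y z g h l. g \<in> Hom w x \<longrightarrow> h \<in> Hom x y \<longrightarrow> l \<in> Hom y z \<longrightarrow>
         cmp w y z l (cmp w x y h g) = cmp w x z (cmp x y z l h) g) \<and>
     (\<forall>x. idm x \<in> Hom x x \<and> idm x \<noteq> 0) \<and>
     (\<forall>x y g. g \<in> Hom x y \<longrightarrow> cmp x x y g (idm x) = g \<and> cmp x y y (idm y) g = g)"

definition hrel :: "('o \<Rightarrow> 'o \<Rightarrow> 'm::zero set) \<Rightarrow> ('o \<times> 'o) set" where
  "hrel Hom = {(x, y). Hom x y \<noteq> {0}}"

definition precle :: "('o \<Rightarrow> 'o \<Rightarrow> 'm::zero set) \<Rightarrow> 'o \<Rightarrow> 'o \<Rightarrow> bool" where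
  "precle Hom x y \<longleftrightarrow> (x, y) \<in> (hrel Hom)\<^sup>+"

definition precl :: "('o \<Rightarrow> 'o \<Rightarrow> 'm::zero set) \<Rightarrow> 'o \<Rightarrow> 'o \<Rightarrow> bool" where
  "precl Hom x y \<longleftrightarrow> precle Hom x y \<and> \<not> precle Hom y x"

definition locally_finite ::
  "('k::field \<Rightarrow> 'm::ab_group_add \<Rightarrow> 'm) \<Rightarrow> ('o \<Rightarrow> 'o \<Rightarrow> 'm set) \<Rightarrow> bool" where
  "locally_finite sM Hom \<longleftrightarrow>
     (\<forall>x y. \<exists>B. finite B \<and> Hom x y \<subseteq> module.span sM B) \<and>
     (\<forall>x y. finite {z. precle Hom x z \<and> precle Hom z y})"

definition left_strictly_locally_finite ::
  "('k::field \<Rightarrow> 'm::ab_group_add \<Rightarrow> 'm) \<Rightarrow> ('o \<Rightarrow> 'o \<Rightarrow> 'm set)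
   \<Rightarrow> ('o \<Rightarrow> 'o \<Rightarrow> 'o \<Rightarrow> 'm \<Rightarrow> 'm \<Rightarrow> 'm) \<Rightarrow> bool" where
  "left_strictly_locally_finite sM Hom cmp \<longleftrightarrow>
     locally_finite sM Hom \<and>
     (\<forall>y. \<exists>X. finite X \<and> (\<forall>x\<in>X. precl Hom x y) \<and>
        (\<forall>z f. precl Hom z y \<longrightarrow> f \<in> Hom z y \<longrightarrow>
           (\<exists>(n::nat) xs g h. (\<forall>i<n. xs i \<in> X \<and> g i \<in> Hom z (xs i) \<and> h i \<in> Hom (xs i) y) \<and>
               f = (\<Sum>i<n. cmp z (xs i) y (h i) (g i)))))"

text \<open>Elements of C_E = (direct sum over x,y of Hom(x,y)^* ) are represented as finitely supported
  families c with c x y a linear functional on Hom x y (extended by 0 outside Hom x y).\<close>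

definition dualsp :: "('k::field \<Rightarrow> 'm::ab_group_add \<Rightarrow> 'm) \<Rightarrow> 'm set \<Rightarrow> ('m \<Rightarrow> 'k) set" where
  "dualsp sM V = {\<phi>. (\<forall>u\<in>V. \<forall>v\<in>V. \<phi> (u + v) = \<phi> u + \<phi> v) \<and>
                     (\<forall>a. \<forall>v\<in>V. \<phi> (sM a v) = a * \<phi> v) \<and> (\<forall>v. v \<notin> V \<longrightarrow> \<phi> v = 0)}"

definition csupp :: "('o \<Rightarrow> 'o \<Rightarrow> 'm \<Rightarrow> 'k::zero) \<Rightarrow> ('o \<times> 'o) set" where
  "csupp c = {(x, y). c x y \<noteq> (\<lambda>_. 0)}"

definition Cset :: "('k::field \<Rightarrow> 'm::ab_group_add \<Rightarrow> 'm) \<Rightarrow> ('o \<Rightarrow> 'o \<Rightarrow> 'm set)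
   \<Rightarrow> ('o \<Rightarrow> 'o \<Rightarrow> 'm \<Rightarrow> 'k) set" where
  "Cset sM Hom = {c. (\<forall>x y. c x y \<in> dualsp sM (Hom x y)) \<and> finite (csupp c)}"

definition cadd :: "('o \<Rightarrow> 'o \<Rightarrow> 'm \<Rightarrow> 'k::field) \<Rightarrow> ('o \<Rightarrow> 'o \<Rightarrow> 'm \<Rightarrow> 'k) \<Rightarrow> ('o \<Rightarrow> 'o \<Rightarrow> 'm \<Rightarrow> 'k)" where
  "cadd c d = (\<lambda>x y m. c x y m + d x y m)"

definition cscale :: "'k::field \<Rightarrow> ('o \<Rightarrow> 'o \<Rightarrow> 'm \<Rightarrow> 'k) \<Rightarrow> ('o \<Rightarrow> 'o \<Rightarrow> 'm \<Rightarrow> 'k)" where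
  "cscale a c = (\<lambda>x y m. a * c x y m)"

text \<open>Counit: zero on C^{x,y} for x \<noteq> y, evaluation at idm x on C^{x,x}.\<close>
definition counit :: "('o \<Rightarrow> 'm) \<Rightarrow> ('o \<Rightarrow> 'o \<Rightarrow> 'm \<Rightarrow> 'k::field) \<Rightarrow> 'k" where
  "counit idm c = (\<Sum>x\<in>{x. (x, x) \<in> csupp c}. c x x (idm x))"

definition cdelta :: "'o \<Rightarrow> 'o \<Rightarrow> ('m \<Rightarrow> 'k::zero) \<Rightarrow> ('o \<Rightarrow> 'o \<Rightarrow> 'm \<Rightarrow> 'k)" where
  "cdelta x y \<phi> = (\<lambda>x' y'. if x' = x \<and> y' = y then \<phi> else (\<lambda>_. 0))"

definition hbasis :: "('k::field \<Rightarrow> 'm::ab_group_add \<Rightarrow> 'm) \<Rightarrow> ('o \<Rightarrow> 'o \<Rightarrow> 'm set) \<Rightarrow> 'o \<Rightarrow> 'o \<Rightarrow> 'm set" where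
  "hbasis sM Hom x y = (SOME B. B \<subseteq> Hom x y \<and> module.independent sM B \<and> module.span sM B = Hom x y)"

definition dualvec :: "('k::field \<Rightarrow> 'm::ab_group_add \<Rightarrow> 'm) \<Rightarrow> 'm set \<Rightarrow> 'm \<Rightarrow> ('m \<Rightarrow> 'k)" where
  "dualvec sM B g = (\<lambda>v. module.representation sM B v g)"

definition homC :: "('k::field \<Rightarrow> 'm::ab_group_add \<Rightarrow> 'm) \<Rightarrow> ('o \<Rightarrow> 'o \<Rightarrow> 'm set)
   \<Rightarrow> ('k \<Rightarrow> 'p::ab_group_add \<Rightarrow> 'p) \<Rightarrow> (('o \<Rightarrow> 'o \<Rightarrow> 'm \<Rightarrow> 'k) \<Rightarrow> 'p) set" where
  "homC sM Hom sP = {f. (\<forall>c\<in>Cset sM Hom. \<forall>d\<in>Cset sM Hom. f (cadd c d) = f c + f d) \<and>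
                       (\<forall>a. \<forall>c\<in>Cset sM Hom. f (cscale a c) = sP a (f c)) \<and>
                       (\<forall>c. c \<notin> Cset sM Hom \<longrightarrow> f c = 0)}"

definition homCC :: "('k::field \<Rightarrow> 'm::ab_group_add \<Rightarrow> 'm) \<Rightarrow> ('o \<Rightarrow> 'o \<Rightarrow> 'm set)
   \<Rightarrow> ('k \<Rightarrow> 'p::ab_group_add \<Rightarrow> 'p)
   \<Rightarrow> (('o \<Rightarrow> 'o \<Rightarrow> 'm \<Rightarrow> 'k) \<Rightarrow> ('o \<Rightarrow> 'o \<Rightarrow> 'm \<Rightarrow> 'k) \<Rightarrow> 'p) set" where
  "homCC sM Hom sP = {F. (\<forall>c\<in>Cset sM Hom. F c \<in> homC sM Hom sP) \<and>
       (\<forall>c\<in>Cset sM Hom. \<forall>d\<in>Cset sM Hom. F (cadd c d) = (\<lambda>e. F c e + F d e)) \<and>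
       (\<forall>a. \<forall>c\<in>Cset sM Hom. F (cscale a c) = (\<lambda>e. sP a (F c e))) \<and>
       (\<forall>c. c \<notin> Cset sM Hom \<longrightarrow> F c = (\<lambda>_. 0))}"

text \<open>For F in Hom_k(C, Hom_k(C, P)), viewed as the map C \<otimes> C \<rightarrow> P, c' \<otimes> c'' \<mapsto> F c'' c',
  this is the composite with the comultiplication, F \<circ> \<mu> in Hom_k(C, P).  The comultiplication
  C^{x,y} \<rightarrow> \<bigoplus>_z C^{x,z} \<otimes> C^{z,y}, dual to composition, is written out in dual bases:
  \<mu>(\<phi>) = \<Sum>_z \<Sum>_{g,h} \<phi>(h g) g^* \<otimes> h^*  (g running over a basis of Hom x z, h over a basis of Hom z y).\<close>
definition comult_comp :: "('k::field \<Rightarrow> 'm::ab_group_add \<Rightarrow> 'm) \<Rightarrow> ('o \<Rightarrow> 'o \<Rightarrow> 'm set)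
   \<Rightarrow> ('o \<Rightarrow> 'o \<Rightarrow> 'o \<Rightarrow> 'm \<Rightarrow> 'm \<Rightarrow> 'm) \<Rightarrow> ('k \<Rightarrow> 'p::ab_group_add \<Rightarrow> 'p)
   \<Rightarrow> (('o \<Rightarrow> 'o \<Rightarrow> 'm \<Rightarrow> 'k) \<Rightarrow> ('o \<Rightarrow> 'o \<Rightarrow> 'm \<Rightarrow> 'k) \<Rightarrow> 'p)
   \<Rightarrow> (('o \<Rightarrow> 'o \<Rightarrow> 'm \<Rightarrow> 'k) \<Rightarrow> 'p)" where
  "comult_comp sM Hom cmp sP F = (\<lambda>c. if c \<in> Cset sM Hom then
      (\<Sum>(x, y)\<in>csupp c. \<Sum>z\<in>{z. precle Hom x z \<and> precle Hom z y}.
         \<Sum>g\<in>hbasis sM Hom x z. \<Sum>h\<in>hbasis sM Hom z y.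
           sP (c x y (cmp x z y h g))
              (F (cdelta z y (dualvec sM (hbasis sM Hom z y) h))
                 (cdelta x z (dualvec sM (hbasis sM Hom x z) g))))
    else 0)"

definition contramodule :: "('k::field \<Rightarrow> 'm::ab_group_add \<Rightarrow> 'm) \<Rightarrow> ('o \<Rightarrow> 'o \<Rightarrow> 'm set)
   \<Rightarrow> ('o \<Rightarrow> 'o \<Rightarrow> 'o \<Rightarrow> 'm \<Rightarrow> 'm \<Rightarrow> 'm) \<Rightarrow> ('o \<Rightarrow> 'm)
   \<Rightarrow> ('k \<Rightarrow> 'p::ab_group_add \<Rightarrow> 'p) \<Rightarrow> ((('o \<Rightarrow> 'o \<Rightarrow> 'm \<Rightarrow> 'k) \<Rightarrow> 'p) \<Rightarrow> 'p) \<Rightarrow> bool" where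
  "contramodule sM Hom cmp idm sP \<pi> \<longleftrightarrow>
     vector_space sP \<and>
     (\<forall>f\<in>homC sM Hom sP. \<forall>g\<in>homC sM Hom sP. \<pi> (\<lambda>c. f c + g c) = \<pi> f + \<pi> g) \<and>
     (\<forall>a. \<forall>f\<in>homC sM Hom sP. \<pi> (\<lambda>c. sP a (f c)) = sP a (\<pi> f)) \<and>
     (\<forall>p. \<pi> (\<lambda>c. if c \<in> Cset sM Hom then sP (counit idm c) p else 0) = p) \<and>
     (\<forall>F\<in>homCC sM Hom sP.
        \<pi> (\<lambda>c. if c \<in> Cset sM Hom then \<pi> (F c) else 0) = \<pi> (comult_comp sM Hom cmp sP F))"

definition contra_mor :: "('k::field \<Rightarrow> 'm::ab_group_add \<Rightarrow> 'm) \<Rightarrow> ('o \<Rightarrow> 'o \<Rightarrow> 'm set)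
   \<Rightarrow> ('k \<Rightarrow> 'p::ab_group_add \<Rightarrow> 'p) \<Rightarrow> ((('o \<Rightarrow> 'o \<Rightarrow> 'm \<Rightarrow> 'k) \<Rightarrow> 'p) \<Rightarrow> 'p)
   \<Rightarrow> ('k \<Rightarrow> 'q::ab_group_add \<Rightarrow> 'q) \<Rightarrow> ((('o \<Rightarrow> 'o \<Rightarrow> 'm \<Rightarrow> 'k) \<Rightarrow> 'q) \<Rightarrow> 'q)
   \<Rightarrow> ('p \<Rightarrow> 'q) \<Rightarrow> bool" where
  "contra_mor sM Hom sP \<pi>P sQ \<pi>Q t \<longleftrightarrow>
     (\<forall>p p'. t (p + p') = t p + t p') \<and> (\<forall>a p. t (sP a p) = sQ a (t p)) \<and>
     (\<forall>f\<in>homC sM Hom sP. t (\<pi>P f) = \<pi>Q (t \<circ> f))"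

definition cact :: "('k::field \<Rightarrow> 'm::ab_group_add \<Rightarrow> 'm) \<Rightarrow> ('o \<Rightarrow> 'o \<Rightarrow> 'm set)
   \<Rightarrow> ('k \<Rightarrow> 'p::ab_group_add \<Rightarrow> 'p) \<Rightarrow> ((('o \<Rightarrow> 'o \<Rightarrow> 'm \<Rightarrow> 'k) \<Rightarrow> 'p) \<Rightarrow> 'p)
   \<Rightarrow> (('o \<Rightarrow> 'o \<Rightarrow> 'm \<Rightarrow> 'k) \<Rightarrow> 'k) \<Rightarrow> 'p \<Rightarrow> 'p" where
  "cact sM Hom sP \<pi> \<phi> p = \<pi> (\<lambda>c. if c \<in> Cset sM Hom then sP (\<phi> c) p else 0)"

definition evf :: "'o \<Rightarrow> 'o \<Rightarrow> 'm \<Rightarrow> (('o \<Rightarrow> 'o \<Rightarrow> 'm \<Rightarrow> 'k) \<Rightarrow> 'k)" where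
  "evf x y f = (\<lambda>c. c x y f)"

definition eobj :: "('o \<Rightarrow> 'm) \<Rightarrow> 'o \<Rightarrow> (('o \<Rightarrow> 'o \<Rightarrow> 'm \<Rightarrow> 'k) \<Rightarrow> 'k)" where
  "eobj idm x = evf x x (idm x)"

definition Theta_obj :: "('k::field \<Rightarrow> 'm::ab_group_add \<Rightarrow> 'm) \<Rightarrow> ('o \<Rightarrow> 'o \<Rightarrow> 'm set) \<Rightarrow> ('o \<Rightarrow> 'm)
   \<Rightarrow> ('k \<Rightarrow> 'p::ab_group_add \<Rightarrow> 'p) \<Rightarrow> ((('o \<Rightarrow> 'o \<Rightarrow> 'm \<Rightarrow> 'k) \<Rightarrow> 'p) \<Rightarrow> 'p) \<Rightarrow> 'o \<Rightarrow> 'p set" where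
  "Theta_obj sM Hom idm sP \<pi> x = range (cact sM Hom sP \<pi> (eobj idm x))"

definition Theta_act :: "('k::field \<Rightarrow> 'm::ab_group_add \<Rightarrow> 'm) \<Rightarrow> ('o \<Rightarrow> 'o \<Rightarrow> 'm set)
   \<Rightarrow> ('k \<Rightarrow> 'p::ab_group_add \<Rightarrow> 'p) \<Rightarrow> ((('o \<Rightarrow> 'o \<Rightarrow> 'm \<Rightarrow> 'k) \<Rightarrow> 'p) \<Rightarrow> 'p)
   \<Rightarrow> 'o \<Rightarrow> 'o \<Rightarrow> 'm \<Rightarrow> 'p \<Rightarrow> 'p" where
  "Theta_act sM Hom sP \<pi> x y f p = cact sM Hom sP \<pi> (evf x y f) p"

definition module_mor :: "('o \<Rightarrow> 'o \<Rightarrow> 'm set)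
   \<Rightarrow> ('k \<Rightarrow> 'p::ab_group_add \<Rightarrow> 'p) \<Rightarrow> ('o \<Rightarrow> 'p set) \<Rightarrow> ('o \<Rightarrow> 'o \<Rightarrow> 'm \<Rightarrow> 'p \<Rightarrow> 'p)
   \<Rightarrow> ('k \<Rightarrow> 'q::ab_group_add \<Rightarrow> 'q) \<Rightarrow> ('o \<Rightarrow> 'q set) \<Rightarrow> ('o \<Rightarrow> 'o \<Rightarrow> 'm \<Rightarrow> 'q \<Rightarrow> 'q)
   \<Rightarrow> ('o \<Rightarrow> 'p \<Rightarrow> 'q) \<Rightarrow> bool" where
  "module_mor Hom sP P actP sQ Q actQ t \<longleftrightarrow>
     (\<forall>x. \<forall>p\<in>P x. t x p \<in> Q x) \<and>
     (\<forall>x. \<forall>p\<in>P x. \<forall>p'\<in>P x. t x (p + p') = t x p + t x p') \<and>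
     (\<forall>x a. \<forall>p\<in>P x. t x (sP a p) = sQ a (t x p)) \<and>
     (\<forall>x y f. \<forall>p\<in>P x. f \<in> Hom x y \<longrightarrow> t y (actP x y f p) = actQ x y f (t x p))"

end

theory Submission
  imports Defs
begin

text \<open>A linear map \<open>C_E \<rightarrow> P\<close> is a locally finite formal sum \<open>\<Sum>\<^sub>i f\<^sub>i \<otimes> p\<^sub>i\<close> of morphisms
  with coefficients in \<open>P\<close>, and the contraaction \<open>\<pi>\<close> evaluates such sums; contraassociativity
  says that a formal sum of evaluated formal sums evaluates like the single formal sum of the
  composites. Since \<open>p = \<pi>(\<Sum>\<^sub>x id\<^sub>x \<otimes> e\<^sub>x p)\<close>, a contramodule morphism is determined by its
  restrictions to the components \<open>e\<^sub>x P\<close>: this is faithfulness. For fullness, a morphism \<open>t\<close> of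
  the underlying \<open>E\<close>-modules is extended by \<open>g p = \<pi>(\<Sum>\<^sub>x id\<^sub>x \<otimes> t\<^sub>x(e\<^sub>x p))\<close>, and \<open>g\<close> commutes
  with \<open>\<pi>\<close> as soon as \<open>t\<close> commutes with the evaluation of formal sums into a single object \<open>y\<close>.
  The defect of such a sum lies in \<open>e\<^sub>y Q\<close>, and strict local finiteness (morphisms from strictly
  lower objects factor through finitely many strictly lower objects) writes it as a finite sum of
  actions on defects at strictly lower objects. A Nakayama argument kills it: iterating this
  descent gives a tree of paths whose formal sum is admissible by local finiteness, and
  contraassociativity shows that the root term of that sum vanishes.\<close>

section \<open>Linear categories with chosen bases\<close>

locale kcategory =
  fixes sM :: "'k::field \<Rightarrow> 'm::ab_group_add \<Rightarrow> 'm" and Hom :: "'o \<Rightarrow> 'o \<Rightarrow> 'm set"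
    and cmp :: "'o \<Rightarrow> 'o \<Rightarrow> 'o \<Rightarrow> 'm \<Rightarrow> 'm \<Rightarrow> 'm" and idm :: "'o \<Rightarrow> 'm"
  assumes klin: "klin_cat sM Hom cmp idm" and loc_fin: "locally_finite sM Hom"
begin

sublocale M: vector_space sM
  using klin by (simp add: klin_cat_def)

lemma Hom_subspace: "M.subspace (Hom x y)"
  using klin by (simp add: klin_cat_def)

lemma zero_in_Hom: "0 \<in> Hom x y"
  using Hom_subspace M.subspace_0 by blast

lemma scale_in_Hom: "u \<in> Hom x y \<Longrightarrow> sM a u \<in> Hom x y"
  using Hom_subspace M.subspace_scale by blast

lemma sum_in_Hom: "(\<And>s. s \<in> S \<Longrightarrow> u s \<in> Hom x y) \<Longrightarrow> (\<Sum>s\<in>S. u s) \<in> Hom x y"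
  using Hom_subspace M.subspace_sum by blast

lemma cmp_in_Hom: "g \<in> Hom x y \<Longrightarrow> h \<in> Hom y z \<Longrightarrow> cmp x y z h g \<in> Hom x z"
  using klin by (simp add: klin_cat_def)

lemma cmp_add_right:
  "g \<in> Hom x y \<Longrightarrow> g' \<in> Hom x y \<Longrightarrow> h \<in> Hom y z \<Longrightarrow> cmp x y z h (g + g') = cmp x y z h g + cmp x y z h g'"
  using klin by (simp add: klin_cat_def)

lemma cmp_add_left:
  "g \<in> Hom x y \<Longrightarrow> h \<in> Hom y z \<Longrightarrow> h' \<in> Hom y z \<Longrightarrow> cmp x y z (h + h') g = cmp x y z h g + cmp x y z h' g"
  using klin by (simp add: klin_cat_def)

lemma cmp_scale_right: "g \<in> Hom x y \<Longrightarrow> h \<in> Hom y z \<Longrightarrow> cmp x y z h (sM a g) = sM a (cmp x y z h g)"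
  using klin by (simp add: klin_cat_def)

lemma cmp_scale_left: "g \<in> Hom x y \<Longrightarrow> h \<in> Hom y z \<Longrightarrow> cmp x y z (sM a h) g = sM a (cmp x y z h g)"
  using klin by (simp add: klin_cat_def)

lemma idm_in_Hom: "idm x \<in> Hom x x"
  using klin by (simp add: klin_cat_def)

lemma idm_nonzero: "idm x \<noteq> 0"
  using klin by (simp add: klin_cat_def)

lemma cmp_idm_right: "g \<in> Hom x y \<Longrightarrow> cmp x x y g (idm x) = g"
  using klin by (simp add: klin_cat_def)

lemma cmp_idm_left: "g \<in> Hom x y \<Longrightarrow> cmp x y y (idm y) g = g"
  using klin by (simp add: klin_cat_def)

lemma cmp_zero_right:
  assumes "h \<in> Hom y z"
  shows "cmp x y z h 0 = 0"
  using cmp_scale_right[OF zero_in_Hom assms, where a = 0] by simp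

lemma cmp_zero_left:
  assumes "g \<in> Hom x y"
  shows "cmp x y z 0 g = 0"
  using cmp_scale_left[OF assms zero_in_Hom, where a = 0] by simp

lemma cmp_sum_right:
  "(\<And>s. s \<in> S \<Longrightarrow> g s \<in> Hom x y) \<Longrightarrow> h \<in> Hom y z \<Longrightarrow>
   cmp x y z h (\<Sum>s\<in>S. g s) = (\<Sum>s\<in>S. cmp x y z h (g s))"
  by (induction S rule: infinite_finite_induct) (simp_all add: cmp_zero_right cmp_add_right sum_in_Hom)

lemma cmp_sum_left:
  "(\<And>s. s \<in> S \<Longrightarrow> h s \<in> Hom y z) \<Longrightarrow> g \<in> Hom x y \<Longrightarrow>
   cmp x y z (\<Sum>s\<in>S. h s) g = (\<Sum>s\<in>S. cmp x y z (h s) g)"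
  by (induction S rule: infinite_finite_induct) (simp_all add: cmp_zero_left cmp_add_left sum_in_Hom)

lemma precle_if_nonzero: "m \<in> Hom a b \<Longrightarrow> m \<noteq> 0 \<Longrightarrow> precle Hom a b"
  unfolding precle_def hrel_def by (rule r_into_trancl) auto

lemma precle_refl: "precle Hom x x"
  by (rule precle_if_nonzero[OF idm_in_Hom idm_nonzero])

lemma precle_trans: "precle Hom x y \<Longrightarrow> precle Hom y z \<Longrightarrow> precle Hom x z"
  unfolding precle_def by (rule trancl_trans)

lemma precle_if_cmp_nonzero:
  assumes "g \<in> Hom x z" "h \<in> Hom z y" "cmp x z y h g \<noteq> 0"
  shows "precle Hom x z \<and> precle Hom z y"
  using assms precle_if_nonzero cmp_zero_left cmp_zero_right by metis

lemma finite_interval: "finite {z. precle Hom x z \<and> precle Hom z y}"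
  using loc_fin unfolding locally_finite_def by blast

abbreviation basis :: "'o \<Rightarrow> 'o \<Rightarrow> 'm set" where
  "basis x y \<equiv> hbasis sM Hom x y"

abbreviation coord :: "'o \<Rightarrow> 'o \<Rightarrow> 'm \<Rightarrow> 'm \<Rightarrow> 'k" where
  "coord x y b \<equiv> dualvec sM (hbasis sM Hom x y) b"

lemma basis_of_Hom: "basis x y \<subseteq> Hom x y \<and> M.independent (basis x y) \<and> M.span (basis x y) = Hom x y"
proof -
  obtain B where "B \<subseteq> Hom x y" "M.independent B" "Hom x y \<subseteq> M.span B"
    using M.basis_exists[of "Hom x y"] by metis
  moreover have "M.span B \<subseteq> Hom x y"
    using \<open>B \<subseteq> Hom x y\<close> Hom_subspace by (rule M.span_minimal)
  ultimately have "\<exists>B. B \<subseteq> Hom x y \<and> M.independent B \<and> M.span B = Hom x y"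
    by blast
  then show ?thesis
    unfolding hbasis_def by (rule someI_ex)
qed

lemma basis_subset_Hom: "basis x y \<subseteq> Hom x y"
  using basis_of_Hom by blast

lemma basis_in_Hom: "b \<in> basis x y \<Longrightarrow> b \<in> Hom x y"
  using basis_subset_Hom by blast

lemma finite_basis: "finite (basis x y)"
proof -
  obtain T where "finite T" "Hom x y \<subseteq> M.span T"
    using loc_fin unfolding locally_finite_def by blast
  moreover have "basis x y \<subseteq> M.span T"
    using basis_subset_Hom \<open>Hom x y \<subseteq> M.span T\<close> by blast
  ultimately show ?thesis
    using M.independent_span_bound basis_of_Hom by blast
qed

lemma basis_expansion: "m \<in> Hom x y \<Longrightarrow> (\<Sum>b\<in>basis x y. sM (coord x y b m) b) = m"
  unfolding dualvec_def
  using M.sum_representation_eq[of "basis x y" m "basis x y"] basis_of_Hom finite_basis by auto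

lemma coord_outside: "m \<notin> Hom x y \<Longrightarrow> coord x y b m = 0"
  unfolding dualvec_def M.representation_def using basis_of_Hom by auto

lemma coord_in_dualsp: "coord x y b \<in> dualsp sM (Hom x y)"
  unfolding dualsp_def dualvec_def
  using M.representation_add M.representation_scale coord_outside basis_of_Hom
  by (auto simp: dualvec_def)

lemma dualsp_add: "\<phi> \<in> dualsp sM (Hom x y) \<Longrightarrow> u \<in> Hom x y \<Longrightarrow> v \<in> Hom x y \<Longrightarrow> \<phi> (u + v) = \<phi> u + \<phi> v"
  unfolding dualsp_def by blast

lemma dualsp_scale: "\<phi> \<in> dualsp sM (Hom x y) \<Longrightarrow> u \<in> Hom x y \<Longrightarrow> \<phi> (sM a u) = a * \<phi> u"
  unfolding dualsp_def by blast

lemma dualsp_outside: "\<phi> \<in> dualsp sM V \<Longrightarrow> u \<notin> V \<Longrightarrow> \<phi> u = 0"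
  unfolding dualsp_def by blast

lemma dualsp_zero: "\<phi> \<in> dualsp sM (Hom x y) \<Longrightarrow> \<phi> 0 = 0"
  using dualsp_scale[OF _ zero_in_Hom, where a = 0] by simp

lemma dualsp_sum:
  "\<phi> \<in> dualsp sM (Hom x y) \<Longrightarrow> (\<And>s. s \<in> S \<Longrightarrow> u s \<in> Hom x y) \<Longrightarrow> \<phi> (\<Sum>s\<in>S. u s) = (\<Sum>s\<in>S. \<phi> (u s))"
  by (induction S rule: infinite_finite_induct) (simp_all add: dualsp_zero dualsp_add sum_in_Hom)

lemma dualsp_expansion:
  assumes \<phi>: "\<phi> \<in> dualsp sM (Hom x y)"
  shows "\<phi> m = (\<Sum>b\<in>basis x y. coord x y b m * \<phi> b)"
proof (cases "m \<in> Hom x y")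
  case True
  have "\<phi> m = \<phi> (\<Sum>b\<in>basis x y. sM (coord x y b m) b)"
    using basis_expansion[OF True] by simp
  also have "\<dots> = (\<Sum>b\<in>basis x y. coord x y b m * \<phi> b)"
    using \<phi> by (simp add: dualsp_sum dualsp_scale scale_in_Hom basis_in_Hom)
  finally show ?thesis .
next
  case False
  then show ?thesis
    using coord_outside dualsp_outside[OF \<phi>] by simp
qed

lemma dualsp_regroup:
  assumes vsS: "vector_space sS" and \<phi>: "\<phi> \<in> dualsp sM (Hom a y)"
  shows "(\<Sum>g\<in>basis a y. sS (\<phi> g) (\<Sum>j\<in>S. sS (coord a y g (m j)) (w j))) = (\<Sum>j\<in>S. sS (\<phi> (m j)) (w j))"
proof -
  interpret S: vector_space sS by (fact vsS)
  have "(\<Sum>g\<in>basis a y. sS (\<phi> g) (\<Sum>j\<in>S. sS (coord a y g (m j)) (w j)))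
      = (\<Sum>j\<in>S. sS (\<Sum>g\<in>basis a y. coord a y g (m j) * \<phi> g) (w j))"
    by (simp add: S.scale_sum_right S.scale_sum_left mult.commute sum.swap[where A = "basis a y"])
  then show ?thesis
    by (simp add: dualsp_expansion[OF \<phi>, symmetric])
qed

text \<open>The dual of composition, written in the chosen bases: this is what makes the explicit
  formula for the comultiplication in \<open>comult_comp\<close> agree with composition.\<close>

lemma dualsp_cmp_expansion:
  assumes \<phi>: "\<phi> \<in> dualsp sM (Hom x y)" and m: "m \<in> Hom z y" and m': "m' \<in> Hom x z"
  shows "(\<Sum>g\<in>basis x z. \<Sum>h\<in>basis z y. \<phi> (cmp x z y h g) * (coord z y h m * coord x z g m'))
       = \<phi> (cmp x z y m m')"
proof -
  have gh: "cmp x z y h g \<in> Hom x y" if "h \<in> basis z y" "g \<in> basis x z" for h g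
    using that by (simp add: cmp_in_Hom basis_in_Hom)
  have "cmp x z y m m'
      = cmp x z y (\<Sum>h\<in>basis z y. sM (coord z y h m) h) (\<Sum>g\<in>basis x z. sM (coord x z g m') g)"
    using basis_expansion[OF m] basis_expansion[OF m'] by simp
  also have "\<dots> = (\<Sum>g\<in>basis x z. \<Sum>h\<in>basis z y. sM (coord z y h m * coord x z g m') (cmp x z y h g))"
    by (simp add: cmp_sum_left cmp_sum_right sum_in_Hom scale_in_Hom basis_in_Hom
        cmp_scale_left cmp_scale_right M.scale_sum_right mult.commute)
  finally show ?thesis
    using \<phi> gh by (simp add: dualsp_sum dualsp_scale sum_in_Hom scale_in_Hom mult.commute)
qed

lemma cmp_basis_expansion:
  assumes g: "\<And>i. i \<in> S \<Longrightarrow> g i \<in> Hom z x" and h: "\<And>i. i \<in> S \<Longrightarrow> h i \<in> Hom x y"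
  shows "(\<Sum>b\<in>basis x y. cmp z x y b (\<Sum>i\<in>S. sM (coord x y b (h i)) (g i))) = (\<Sum>i\<in>S. cmp z x y (h i) (g i))"
proof -
  have "(\<Sum>b\<in>basis x y. cmp z x y b (\<Sum>i\<in>S. sM (coord x y b (h i)) (g i)))
      = (\<Sum>i\<in>S. \<Sum>b\<in>basis x y. cmp z x y (sM (coord x y b (h i)) b) (g i))"
    using g by (simp add: cmp_sum_right cmp_scale_right cmp_scale_left scale_in_Hom basis_in_Hom
        sum.swap[where A = "basis x y"])
  also have "\<dots> = (\<Sum>i\<in>S. cmp z x y (h i) (g i))"
    using g h by (simp add: cmp_sum_left[symmetric] scale_in_Hom basis_in_Hom basis_expansion)
  finally show ?thesis .
qed

text \<open>Expanding the factorizations given by strict local finiteness in the chosen bases makes all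
  morphisms into \<open>y\<close> from strictly lower objects factor through one finite set of basis morphisms
  \<open>b : x \<rightarrow> y\<close>.\<close>

lemma lower_factorization:
  assumes "left_strictly_locally_finite sM Hom cmp"
  obtains Os :: "('o \<times> 'm) set" where "finite Os"
    and "\<And>ob. ob \<in> Os \<Longrightarrow> precl Hom (fst ob) y \<and> snd ob \<in> Hom (fst ob) y"
    and "\<And>z f. precl Hom z y \<Longrightarrow> f \<in> Hom z y \<Longrightarrow>
           \<exists>G. (\<forall>ob\<in>Os. G ob \<in> Hom z (fst ob)) \<and> f = (\<Sum>ob\<in>Os. cmp z (fst ob) y (snd ob) (G ob))"
proof -
  obtain X where X: "finite X" "\<forall>x\<in>X. precl Hom x y"
    and gen: "\<forall>z f. precl Hom z y \<longrightarrow> f \<in> Hom z y \<longrightarrow>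
       (\<exists>(n::nat) xs g h. (\<forall>i<n. xs i \<in> X \<and> g i \<in> Hom z (xs i) \<and> h i \<in> Hom (xs i) y) \<and>
          f = (\<Sum>i<n. cmp z (xs i) y (h i) (g i)))"
    using assms unfolding left_strictly_locally_finite_def by blast
  let ?Os = "Sigma X (\<lambda>x. basis x y)"
  have factor: "\<exists>G. (\<forall>ob\<in>?Os. G ob \<in> Hom z (fst ob)) \<and> f = (\<Sum>ob\<in>?Os. cmp z (fst ob) y (snd ob) (G ob))"
    if lower: "precl Hom z y" "f \<in> Hom z y" for z f
  proof -
    obtain n :: nat and xs g h where fac: "\<forall>i<n. xs i \<in> X \<and> g i \<in> Hom z (xs i) \<and> h i \<in> Hom (xs i) y"
      and f_eq: "f = (\<Sum>i<n. cmp z (xs i) y (h i) (g i))"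
      using gen lower by blast
    let ?S = "\<lambda>x. {i. i < n \<and> xs i = x}"
    define G where "G ob = (\<Sum>i\<in>?S (fst ob). sM (coord (fst ob) y (snd ob) (h i)) (g i))" for ob
    have "G ob \<in> Hom z (fst ob)" for ob
      unfolding G_def using fac by (auto intro!: sum_in_Hom scale_in_Hom)
    moreover have "(\<Sum>ob\<in>?Os. cmp z (fst ob) y (snd ob) (G ob)) = (\<Sum>x\<in>X. \<Sum>b\<in>basis x y. cmp z x y b (G (x, b)))"
      using X(1) finite_basis by (simp add: sum.Sigma split_beta)
    moreover have "\<dots> = (\<Sum>x\<in>X. \<Sum>i\<in>?S x. cmp z x y (h i) (g i))"
      unfolding G_def fst_conv snd_conv using fac by (intro sum.cong refl cmp_basis_expansion) auto
    moreover have "\<dots> = f"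
      unfolding f_eq using fac X(1) by (subst sum.group[symmetric, where g = xs]) (auto intro!: sum.cong)
    ultimately show ?thesis
      by (intro exI[of _ G]) simp
  qed
  show ?thesis
  proof (rule that)
    show "finite ?Os"
      using X(1) finite_basis by blast
    show "ob \<in> ?Os \<Longrightarrow> precl Hom (fst ob) y \<and> snd ob \<in> Hom (fst ob) y" for ob
      using X(2) basis_in_Hom by auto
  qed (rule factor)
qed

end

section \<open>Locally finite formal sums\<close>

context kcategory
begin

lemma Cset_dualsp: "c \<in> Cset sM Hom \<Longrightarrow> c x y \<in> dualsp sM (Hom x y)"
  unfolding Cset_def by blast

lemma finite_csupp: "c \<in> Cset sM Hom \<Longrightarrow> finite (csupp c)"
  unfolding Cset_def by blast

lemma csupp_outside: "(x, y) \<notin> csupp c \<Longrightarrow> c x y v = 0"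
  unfolding csupp_def by auto

lemma csupp_if_nonzero: "c x y v \<noteq> 0 \<Longrightarrow> (x, y) \<in> csupp c"
  using csupp_outside by metis

lemma CsetI: "(\<And>x y. c x y \<in> dualsp sM (Hom x y)) \<Longrightarrow> finite (csupp c) \<Longrightarrow> c \<in> Cset sM Hom"
  unfolding Cset_def by blast

lemma cadd_in_Cset: "c \<in> Cset sM Hom \<Longrightarrow> d \<in> Cset sM Hom \<Longrightarrow> cadd c d \<in> Cset sM Hom"
proof (rule CsetI)
  assume "c \<in> Cset sM Hom" "d \<in> Cset sM Hom"
  then show "cadd c d x y \<in> dualsp sM (Hom x y)" for x y
    using Cset_dualsp[of c x y] Cset_dualsp[of d x y]
    unfolding cadd_def dualsp_def by (simp add: algebra_simps)
  have "csupp (cadd c d) \<subseteq> csupp c \<union> csupp d"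
    unfolding csupp_def cadd_def by (auto simp: fun_eq_iff)
  then show "finite (csupp (cadd c d))"
    using finite_csupp \<open>c \<in> Cset sM Hom\<close> \<open>d \<in> Cset sM Hom\<close> by (meson finite_UnI finite_subset)
qed

lemma cscale_in_Cset: "c \<in> Cset sM Hom \<Longrightarrow> cscale a c \<in> Cset sM Hom"
proof (rule CsetI)
  assume "c \<in> Cset sM Hom"
  then show "cscale a c x y \<in> dualsp sM (Hom x y)" for x y
    using Cset_dualsp[of c x y] unfolding cscale_def dualsp_def by (simp add: algebra_simps)
  have "csupp (cscale a c) \<subseteq> csupp c"
    unfolding csupp_def cscale_def by (auto simp: fun_eq_iff)
  then show "finite (csupp (cscale a c))"
    using finite_csupp[OF \<open>c \<in> Cset sM Hom\<close>] by (rule finite_subset)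
qed

lemma csupp_cdelta: "csupp (cdelta x y \<phi>) \<subseteq> {(x, y)}"
  unfolding csupp_def cdelta_def by (auto simp: fun_eq_iff)

lemma cdelta_in_Cset: "\<phi> \<in> dualsp sM (Hom x y) \<Longrightarrow> cdelta x y \<phi> \<in> Cset sM Hom"
proof (rule CsetI)
  show "\<phi> \<in> dualsp sM (Hom x y) \<Longrightarrow> cdelta x y \<phi> x' y' \<in> dualsp sM (Hom x' y')" for x' y'
    unfolding cdelta_def by (auto simp: dualsp_def)
  show "finite (csupp (cdelta x y \<phi>))"
    using csupp_cdelta by (rule finite_subset) simp
qed

lemma zero_in_Cset: "(\<lambda>x y m. 0) \<in> Cset sM Hom"
  by (rule CsetI) (auto simp: dualsp_def csupp_def)

text \<open>An element of \<open>Hom_k(C_E, R)\<close> is the same as a formal sum \<open>\<Sum>\<^sub>i f\<^sub>i \<otimes> r\<^sub>i\<close> with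
  \<open>f\<^sub>i \<in> Hom(src i, tgt i)\<close> and only finitely many \<open>i\<close> for each pair of objects; \<open>fam\<close> is the
  linear map \<open>c \<mapsto> \<Sum>\<^sub>i c(f\<^sub>i) r\<^sub>i\<close> it induces.\<close>

definition fam :: "('k \<Rightarrow> 'r::ab_group_add \<Rightarrow> 'r) \<Rightarrow> 'i set \<Rightarrow> ('i \<Rightarrow> 'o) \<Rightarrow> ('i \<Rightarrow> 'o)
    \<Rightarrow> ('i \<Rightarrow> 'm) \<Rightarrow> ('i \<Rightarrow> 'r) \<Rightarrow> ('o \<Rightarrow> 'o \<Rightarrow> 'm \<Rightarrow> 'k) \<Rightarrow> 'r" where
  "fam sR I src tgt mor val c = (if c \<in> Cset sM Hom then
      (\<Sum>i\<in>{i\<in>I. (src i, tgt i) \<in> csupp c}. sR (c (src i) (tgt i) (mor i)) (val i)) else 0)"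

definition admissible :: "'i set \<Rightarrow> ('i \<Rightarrow> 'o) \<Rightarrow> ('i \<Rightarrow> 'o) \<Rightarrow> ('i \<Rightarrow> 'm) \<Rightarrow> bool" where
  "admissible I src tgt mor \<longleftrightarrow>
     (\<forall>i\<in>I. mor i \<in> Hom (src i) (tgt i)) \<and> (\<forall>a b. finite {i\<in>I. src i = a \<and> tgt i = b})"

lemma admissible_Hom: "admissible I src tgt mor \<Longrightarrow> i \<in> I \<Longrightarrow> mor i \<in> Hom (src i) (tgt i)"
  unfolding admissible_def by blast

lemma admissible_finite: "admissible I src tgt mor \<Longrightarrow> finite {i\<in>I. src i = a \<and> tgt i = b}"
  unfolding admissible_def by blast

lemma admissibleI:
  "(\<And>i. i \<in> I \<Longrightarrow> mor i \<in> Hom (src i) (tgt i)) \<Longrightarrow> (\<And>a b. finite {i\<in>I. src i = a \<and> tgt i = b})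
   \<Longrightarrow> admissible I src tgt mor"
  unfolding admissible_def by blast

lemma admissible_finite_pairs:
  assumes "admissible I src tgt mor" "finite S"
  shows "finite {i\<in>I. (src i, tgt i) \<in> S}"
proof -
  have "{i\<in>I. (src i, tgt i) \<in> S} = (\<Union>(a, b)\<in>S. {i\<in>I. src i = a \<and> tgt i = b})"
    by auto
  then show ?thesis
    using assms admissible_finite by auto
qed

lemma admissible_subset:
  assumes "admissible I src tgt mor" "J \<subseteq> I"
  shows "admissible J src tgt mor"
proof (rule admissibleI)
  show "mor i \<in> Hom (src i) (tgt i)" if "i \<in> J" for i
    using assms that by (auto intro: admissible_Hom)
  have "{i\<in>J. src i = a \<and> tgt i = b} \<subseteq> {i\<in>I. src i = a \<and> tgt i = b}" for a b
    using assms(2) by auto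
  then show "finite {i\<in>J. src i = a \<and> tgt i = b}" for a b
    using admissible_finite[OF assms(1)] by (rule finite_subset)
qed

lemma admissible_singleton: "mor i \<in> Hom (src i) (tgt i) \<Longrightarrow> admissible {i} src tgt mor"
  by (rule admissibleI) auto

lemma admissible_finite_set: "finite I \<Longrightarrow> (\<And>i. i \<in> I \<Longrightarrow> mor i \<in> Hom (src i) (tgt i)) \<Longrightarrow> admissible I src tgt mor"
  by (rule admissibleI) auto

lemma admissible_retarget:
  assumes "admissible I src (\<lambda>_. y) mor" and "\<And>i. i \<in> I \<Longrightarrow> mor' i \<in> Hom (src i) x"
  shows "admissible I src (\<lambda>_. x) mor'"
proof (rule admissibleI)
  show "finite {i \<in> I. src i = a \<and> x = b}" for a b
    by (rule finite_subset[OF _ admissible_finite[OF assms(1), of a y]]) auto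
qed (rule assms(2))

lemma admissible_composites:
  assumes okI: "admissible I src tgt mor" and okJ: "\<And>i. i \<in> I \<Longrightarrow> admissible (J i) (srcJ i) (tgtJ i) (morJ i)"
    and K: "K = {k. fst k \<in> I \<and> snd k \<in> J (fst k) \<and> tgtJ (fst k) (snd k) = src (fst k)}"
    and finK: "\<And>a b. finite {k\<in>K. srcJ (fst k) (snd k) = a \<and> tgt (fst k) = b}"
  shows "admissible K (\<lambda>k. srcJ (fst k) (snd k)) (\<lambda>k. tgt (fst k))
    (\<lambda>k. cmp (srcJ (fst k) (snd k)) (src (fst k)) (tgt (fst k)) (mor (fst k)) (morJ (fst k) (snd k)))"
proof (rule admissibleI)
  fix k
  assume "k \<in> K"
  then have "mor (fst k) \<in> Hom (src (fst k)) (tgt (fst k))"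
    "morJ (fst k) (snd k) \<in> Hom (srcJ (fst k) (snd k)) (src (fst k))"
    using K admissible_Hom[OF okI] admissible_Hom[OF okJ] by force+
  then show "cmp (srcJ (fst k) (snd k)) (src (fst k)) (tgt (fst k)) (mor (fst k)) (morJ (fst k) (snd k))
      \<in> Hom (srcJ (fst k) (snd k)) (tgt (fst k))"
    by (rule cmp_in_Hom[rotated])
qed (rule finK)

lemma fam_outside: "c \<notin> Cset sM Hom \<Longrightarrow> fam sR I src tgt mor val c = 0"
  unfolding fam_def by simp

lemma fam_empty: "fam sR {} src tgt mor val = (\<lambda>c. 0)"
  by (simp add: fam_def fun_eq_iff)

lemma fam_cong:
  "I = I' \<Longrightarrow> (\<And>i. i \<in> I \<Longrightarrow> src i = src' i \<and> tgt i = tgt' i \<and> mor i = mor' i \<and> val i = val' i)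
   \<Longrightarrow> fam sR I src tgt mor val = fam sR I' src' tgt' mor' val'"
  unfolding fam_def fun_eq_iff
  by (intro allI if_cong refl sum.cong) auto

lemma fam_reindex:
  assumes "inj_on h K"
  shows "fam sR (h ` K) src tgt mor val = fam sR K (src \<circ> h) (tgt \<circ> h) (mor \<circ> h) (val \<circ> h)"
proof
  fix c :: "'o \<Rightarrow> 'o \<Rightarrow> 'm \<Rightarrow> 'k"
  have e: "{i \<in> h ` K. (src i, tgt i) \<in> csupp c} = h ` {k \<in> K. (src (h k), tgt (h k)) \<in> csupp c}"
    by auto
  have "inj_on h {k \<in> K. (src (h k), tgt (h k)) \<in> csupp c}"
    using assms by (rule inj_on_subset) auto
  then show "fam sR (h ` K) src tgt mor val c = fam sR K (src \<circ> h) (tgt \<circ> h) (mor \<circ> h) (val \<circ> h) c"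
    unfolding fam_def e by (simp add: sum.reindex)
qed

lemma fam_union:
  assumes ok: "admissible (I1 \<union> I2) src tgt mor" and dis: "I1 \<inter> I2 = {}"
  shows "fam sR (I1 \<union> I2) src tgt mor val = (\<lambda>c. fam sR I1 src tgt mor val c + fam sR I2 src tgt mor val c)"
proof
  fix c
  show "fam sR (I1 \<union> I2) src tgt mor val c = fam sR I1 src tgt mor val c + fam sR I2 src tgt mor val c"
  proof (cases "c \<in> Cset sM Hom")
    case True
    have fin: "finite {i\<in>I1 \<union> I2. (src i, tgt i) \<in> csupp c}"
      using admissible_finite_pairs[OF ok finite_csupp[OF True]] .
    have e: "{i\<in>I1 \<union> I2. (src i, tgt i) \<in> csupp c}
        = {i\<in>I1. (src i, tgt i) \<in> csupp c} \<union> {i\<in>I2. (src i, tgt i) \<in> csupp c}"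
      by auto
    show ?thesis
      unfolding fam_def e using True dis fin[unfolded e] by (subst sum.union_disjoint) auto
  qed (simp add: fam_outside)
qed

lemma fam_comp_linear:
  assumes "additive g" and scale: "\<And>a p. g (sP a p) = sQ a (g p)"
  shows "g \<circ> fam sP I src tgt mor val = fam sQ I src tgt mor (\<lambda>i. g (val i))"
proof -
  interpret G: additive g by fact
  show ?thesis
    unfolding fam_def by (auto simp: fun_eq_iff G.zero G.sum scale)
qed

definition basis_triples :: "('o \<times> 'o \<times> 'm) set" where
  "basis_triples = {i. snd (snd i) \<in> basis (fst i) (fst (snd i))}"

definition basis_triples_into :: "'o \<Rightarrow> ('o \<times> 'o \<times> 'm) set" where
  "basis_triples_into y = {i. fst (snd i) = y \<and> snd (snd i) \<in> basis (fst i) y}"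

lemma admissible_basis_triples: "admissible basis_triples fst (\<lambda>i. fst (snd i)) (\<lambda>i. snd (snd i))"
proof (rule admissibleI)
  show "i \<in> basis_triples \<Longrightarrow> snd (snd i) \<in> Hom (fst i) (fst (snd i))" for i
    unfolding basis_triples_def by (auto intro: basis_in_Hom)
  have "{i \<in> basis_triples. fst i = a \<and> fst (snd i) = b} \<subseteq> (\<lambda>g. (a, b, g)) ` basis a b" for a b
    unfolding basis_triples_def by (auto simp: image_iff)
  then show "finite {i \<in> basis_triples. fst i = a \<and> fst (snd i) = b}" for a b
    by (rule finite_subset) (simp add: finite_basis)
qed

lemma admissible_basis_triples_into: "admissible (basis_triples_into y) fst (\<lambda>_. y) (\<lambda>i. snd (snd i))"
proof (rule admissibleI)
  show "i \<in> basis_triples_into y \<Longrightarrow> snd (snd i) \<in> Hom (fst i) y" for i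
    unfolding basis_triples_into_def by (auto intro: basis_in_Hom)
  have "{i \<in> basis_triples_into y. fst i = a \<and> y = b} \<subseteq> (\<lambda>g. (a, y, g)) ` basis a y" for a b
    unfolding basis_triples_into_def by (auto simp: image_iff)
  then show "finite {i \<in> basis_triples_into y. fst i = a \<and> y = b}" for a b
    by (rule finite_subset) (simp add: finite_basis)
qed

definition csum :: "'s set \<Rightarrow> ('s \<Rightarrow> 'o \<Rightarrow> 'o \<Rightarrow> 'm \<Rightarrow> 'k) \<Rightarrow> 'o \<Rightarrow> 'o \<Rightarrow> 'm \<Rightarrow> 'k" where
  "csum S cc = (\<lambda>x y m. \<Sum>s\<in>S. cc s x y m)"

lemma homC_csum:
  assumes f: "f \<in> homC sM Hom sR" and fin: "finite S" and cc: "\<And>s. s \<in> S \<Longrightarrow> cc s \<in> Cset sM Hom"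
  shows "csum S cc \<in> Cset sM Hom \<and> f (csum S cc) = (\<Sum>s\<in>S. f (cc s))"
  using fin cc
proof (induction S rule: finite_induct)
  case empty
  let ?z = "\<lambda>(x::'o) (y::'o) (m::'m). 0::'k"
  have "f ?z = f (cadd ?z ?z)"
    by (simp add: cadd_def)
  also have "\<dots> = f ?z + f ?z"
    using f zero_in_Cset unfolding homC_def by blast
  finally have "f ?z = 0"
    by simp
  then show ?case
    using zero_in_Cset by (simp add: csum_def)
next
  case (insert s F)
  have "csum (insert s F) cc = cadd (cc s) (csum F cc)"
    unfolding csum_def cadd_def using insert by (simp add: fun_eq_iff)
  then show ?case
    using cadd_in_Cset f insert unfolding homC_def by simp
qed

lemma Cset_basis_expansion:
  assumes c: "c \<in> Cset sM Hom"
  shows "c = csum {i\<in>basis_triples. (fst i, fst (snd i)) \<in> csupp c}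
     (\<lambda>i. cscale (c (fst i) (fst (snd i)) (snd (snd i)))
            (cdelta (fst i) (fst (snd i)) (coord (fst i) (fst (snd i)) (snd (snd i)))))"
proof (intro ext)
  fix x y m
  let ?S = "{i\<in>basis_triples. (fst i, fst (snd i)) \<in> csupp c}"
  have finS: "finite ?S"
    by (rule admissible_finite_pairs[OF admissible_basis_triples finite_csupp[OF c]])
  have "csum ?S (\<lambda>i. cscale (c (fst i) (fst (snd i)) (snd (snd i)))
        (cdelta (fst i) (fst (snd i)) (coord (fst i) (fst (snd i)) (snd (snd i))))) x y m
     = (\<Sum>i\<in>{i\<in>?S. fst i = x \<and> fst (snd i) = y}. c x y (snd (snd i)) * coord x y (snd (snd i)) m)"
    unfolding csum_def cscale_def cdelta_def
    by (rule sum.mono_neutral_cong_right) (use finS in auto)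
  also have "\<dots> = c x y m"
  proof (cases "(x, y) \<in> csupp c")
    case True
    have "{i\<in>?S. fst i = x \<and> fst (snd i) = y} = (\<lambda>g. (x, y, g)) ` basis x y"
      using True unfolding basis_triples_def by force
    moreover have "inj_on (\<lambda>g. (x, y, g)) (basis x y)"
      by (rule inj_onI) simp
    ultimately show ?thesis
      using dualsp_expansion[OF Cset_dualsp[OF c], of x y m] by (simp add: sum.reindex mult.commute)
  next
    case False
    then show ?thesis
      using csupp_outside[OF False] by auto
  qed
  finally show "c x y m = csum ?S (\<lambda>i. cscale (c (fst i) (fst (snd i)) (snd (snd i)))
        (cdelta (fst i) (fst (snd i)) (coord (fst i) (fst (snd i)) (snd (snd i))))) x y m"
    by simp
qed

lemma homC_eq_fam:
  assumes f: "f \<in> homC sM Hom sR"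
  shows "f = fam sR basis_triples fst (\<lambda>i. fst (snd i)) (\<lambda>i. snd (snd i))
              (\<lambda>i. f (cdelta (fst i) (fst (snd i)) (coord (fst i) (fst (snd i)) (snd (snd i)))))"
proof
  fix c
  show "f c = fam sR basis_triples fst (\<lambda>i. fst (snd i)) (\<lambda>i. snd (snd i))
              (\<lambda>i. f (cdelta (fst i) (fst (snd i)) (coord (fst i) (fst (snd i)) (snd (snd i))))) c"
  proof (cases "c \<in> Cset sM Hom")
    case True
    let ?S = "{i\<in>basis_triples. (fst i, fst (snd i)) \<in> csupp c}"
    let ?\<delta> = "\<lambda>i. cdelta (fst i) (fst (snd i)) (coord (fst i) (fst (snd i)) (snd (snd i)))"
    have \<delta>: "?\<delta> i \<in> Cset sM Hom" for i
      by (rule cdelta_in_Cset, rule coord_in_dualsp)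
    have "f c = f (csum ?S (\<lambda>i. cscale (c (fst i) (fst (snd i)) (snd (snd i))) (?\<delta> i)))"
      using Cset_basis_expansion[OF True] by simp
    also have "\<dots> = (\<Sum>i\<in>?S. f (cscale (c (fst i) (fst (snd i)) (snd (snd i))) (?\<delta> i)))"
      using homC_csum[OF f admissible_finite_pairs[OF admissible_basis_triples finite_csupp[OF True]]]
        cscale_in_Cset[OF \<delta>] by simp
    also have "\<dots> = (\<Sum>i\<in>?S. sR (c (fst i) (fst (snd i)) (snd (snd i))) (f (?\<delta> i)))"
      using f \<delta> unfolding homC_def by simp
    finally show ?thesis
      unfolding fam_def using True by simp
  next
    case False
    then show ?thesis
      using f by (simp add: fam_outside homC_def)
  qed
qed

end

lemma sum_swap_nested:
  "(\<Sum>b\<in>B. \<Sum>i\<in>I. \<Sum>j\<in>J i. f b i j) = (\<Sum>i\<in>I. \<Sum>j\<in>J i. \<Sum>b\<in>B. f b i j)"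
  by (subst sum.swap) (simp add: sum.swap[where A = B])

locale kcategory_space = kcategory sM Hom cmp idm
  for sM :: "'k::field \<Rightarrow> 'm::ab_group_add \<Rightarrow> 'm" and Hom :: "'o \<Rightarrow> 'o \<Rightarrow> 'm set"
    and cmp :: "'o \<Rightarrow> 'o \<Rightarrow> 'o \<Rightarrow> 'm \<Rightarrow> 'm \<Rightarrow> 'm" and idm :: "'o \<Rightarrow> 'm" +
  fixes sR :: "'k \<Rightarrow> 'r::ab_group_add \<Rightarrow> 'r"
  assumes vector_space_sR: "vector_space sR"
begin

sublocale R: vector_space sR
  by (fact vector_space_sR)

lemma fam_over_superset:
  assumes ok: "admissible I src tgt mor" and c: "c \<in> Cset sM Hom"
    and S: "finite S" "csupp c \<subseteq> S"
  shows "fam sR I src tgt mor val c = (\<Sum>i\<in>{i\<in>I. (src i, tgt i) \<in> S}. sR (c (src i) (tgt i) (mor i)) (val i))"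
  unfolding fam_def using c S(2)
  by (auto intro!: sum.mono_neutral_left admissible_finite_pairs[OF ok S(1)] csupp_if_nonzero)

lemma fam_in_homC:
  assumes ok: "admissible I src tgt mor"
  shows "fam sR I src tgt mor val \<in> homC sM Hom sR"
  unfolding homC_def mem_Collect_eq
proof (intro conjI ballI allI impI)
  fix c d assume c: "c \<in> Cset sM Hom" and d: "d \<in> Cset sM Hom"
  let ?S = "csupp c \<union> csupp d"
  have S: "finite ?S" "csupp c \<subseteq> ?S" "csupp d \<subseteq> ?S" "csupp (cadd c d) \<subseteq> ?S"
    using c d finite_csupp unfolding csupp_def cadd_def by (auto simp: fun_eq_iff)
  show "fam sR I src tgt mor val (cadd c d) = fam sR I src tgt mor val c + fam sR I src tgt mor val d"
    unfolding fam_over_superset[OF ok cadd_in_Cset[OF c d] S(1,4)]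
      fam_over_superset[OF ok c S(1,2)] fam_over_superset[OF ok d S(1,3)]
    by (simp add: cadd_def R.scale_left_distrib sum.distrib)
next
  fix a c assume c: "c \<in> Cset sM Hom"
  have S: "finite (csupp c)" "csupp (cscale a c) \<subseteq> csupp c"
    using c finite_csupp unfolding csupp_def cscale_def by (auto simp: fun_eq_iff)
  show "fam sR I src tgt mor val (cscale a c) = sR a (fam sR I src tgt mor val c)"
    unfolding fam_over_superset[OF ok cscale_in_Cset[OF c] S] fam_over_superset[OF ok c S(1) order_refl]
    by (simp add: cscale_def R.scale_sum_right)
qed (simp add: fam_outside)

lemma fam_add_vals:
  "fam sR I src tgt mor (\<lambda>i. val i + val' i) = (\<lambda>c. fam sR I src tgt mor val c + fam sR I src tgt mor val' c)"
  unfolding fam_def by (auto simp: fun_eq_iff sum.distrib R.scale_right_distrib)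

lemma fam_scale_vals:
  "fam sR I src tgt mor (\<lambda>i. sR a (val i)) = (\<lambda>c. sR a (fam sR I src tgt mor val c))"
  unfolding fam_def by (auto simp: fun_eq_iff R.scale_sum_right mult.commute)

lemma fam_restrict:
  assumes ok: "admissible I src tgt mor" and J: "J \<subseteq> I"
    and vanish: "\<And>i. i \<in> I - J \<Longrightarrow> mor i = 0 \<or> val i = 0"
  shows "fam sR I src tgt mor val = fam sR J src tgt mor val"
proof
  fix c
  show "fam sR I src tgt mor val c = fam sR J src tgt mor val c"
  proof (cases "c \<in> Cset sM Hom")
    case True
    have "sR (c (src i) (tgt i) (mor i)) (val i) = 0" if "i \<in> I - J" for i
      using vanish[OF that] dualsp_zero[OF Cset_dualsp[OF True]] by auto
    then show ?thesis
      unfolding fam_def if_P[OF True] using J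
      by (intro sum.mono_neutral_right admissible_finite_pairs[OF ok finite_csupp[OF True]]) auto
  qed (simp add: fam_outside)
qed

lemma fam_singleton:
  "fam sR {i} src tgt mor val = (\<lambda>c. if c \<in> Cset sM Hom then sR (c (src i) (tgt i) (mor i)) (val i) else 0)"
  unfolding fam_def by (auto simp: fun_eq_iff Collect_conv_if csupp_outside)

lemma fam_finite:
  assumes fin: "finite I"
  shows "fam sR I src tgt mor val = (\<lambda>c. \<Sum>i\<in>I. fam sR {i} src tgt mor val c)"
proof
  fix c
  show "fam sR I src tgt mor val c = (\<Sum>i\<in>I. fam sR {i} src tgt mor val c)"
  proof (cases "c \<in> Cset sM Hom")
    case True
    have "fam sR I src tgt mor val c = (\<Sum>i\<in>I. sR (c (src i) (tgt i) (mor i)) (val i))"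
      unfolding fam_def using True fin by (auto intro!: sum.mono_neutral_left csupp_if_nonzero)
    then show ?thesis
      using True by (simp add: fam_singleton)
  qed (simp add: fam_outside)
qed

lemma fam_merge:
  assumes okK: "admissible K srcK tgtK morK" and okI: "admissible I src tgt mor"
    and \<phi>: "\<And>k. k \<in> K \<Longrightarrow> \<phi> k \<in> I \<and> srcK k = src (\<phi> k) \<and> tgtK k = tgt (\<phi> k) \<and> valK k = val (\<phi> k)"
    and split: "\<And>i. i \<in> I \<Longrightarrow> mor i = (\<Sum>k\<in>{k\<in>K. \<phi> k = i}. morK k)"
  shows "fam sR K srcK tgtK morK valK = fam sR I src tgt mor val"
proof
  fix c
  show "fam sR K srcK tgtK morK valK c = fam sR I src tgt mor val c"
  proof (cases "c \<in> Cset sM Hom")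
    case True
    let ?SK = "{k\<in>K. (srcK k, tgtK k) \<in> csupp c}" and ?SI = "{i\<in>I. (src i, tgt i) \<in> csupp c}"
    have fK: "finite ?SK"
      by (rule admissible_finite_pairs[OF okK finite_csupp[OF True]])
    have fI: "finite ?SI"
      by (rule admissible_finite_pairs[OF okI finite_csupp[OF True]])
    have fibre: "(\<Sum>k\<in>{k. k \<in> ?SK \<and> \<phi> k = i}. sR (c (srcK k) (tgtK k) (morK k)) (valK k))
        = sR (c (src i) (tgt i) (mor i)) (val i)" if i: "i \<in> ?SI" for i
    proof -
      have e: "{k. k \<in> ?SK \<and> \<phi> k = i} = {k\<in>K. \<phi> k = i}"
        using i \<phi> by auto
      have "c (src i) (tgt i) (mor i) = (\<Sum>k\<in>{k\<in>K. \<phi> k = i}. c (src i) (tgt i) (morK k))"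
        using i split[of i] \<phi> admissible_Hom[OF okK]
        by (subst dualsp_sum[OF Cset_dualsp[OF True], symmetric]) force+
      then show ?thesis
        unfolding e using \<phi> by (simp add: R.scale_sum_left)
    qed
    have "fam sR K srcK tgtK morK valK c
        = (\<Sum>i\<in>?SI. \<Sum>k\<in>{k. k \<in> ?SK \<and> \<phi> k = i}. sR (c (srcK k) (tgtK k) (morK k)) (valK k))"
      unfolding fam_def if_P[OF True] by (rule sum.group[symmetric, OF fK fI]) (use \<phi> in auto)
    also have "\<dots> = fam sR I src tgt mor val c"
      unfolding fam_def using True fibre by simp
    finally show ?thesis .
  qed (simp add: fam_outside)
qed

lemma fam_into_by_source:
  assumes ok: "admissible I src (\<lambda>_. y) mor" and c: "c \<in> Cset sM Hom"
  shows "fam sS I src (\<lambda>_. y) mor v c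
    = (\<Sum>a\<in>{a. (a, y) \<in> csupp c}. \<Sum>i\<in>{i\<in>I. src i = a}. sS (c a y (mor i)) (v i))"
proof -
  let ?A = "{a. (a, y) \<in> csupp c}" and ?S = "{i\<in>I. (src i, y) \<in> csupp c}"
  have "?A = fst ` {p\<in>csupp c. snd p = y}"
    by (auto simp: image_iff)
  then have "finite ?A"
    using finite_csupp[OF c] by simp
  then have "fam sS I src (\<lambda>_. y) mor v c = (\<Sum>a\<in>?A. \<Sum>i\<in>{i. i \<in> ?S \<and> src i = a}. sS (c (src i) y (mor i)) (v i))"
    unfolding fam_def if_P[OF c]
    by (intro sum.group[symmetric] admissible_finite_pairs[OF ok finite_csupp[OF c]]) auto
  also have "\<dots> = (\<Sum>a\<in>?A. \<Sum>i\<in>{i\<in>I. src i = a}. sS (c a y (mor i)) (v i))"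
    by (intro sum.cong) auto
  finally show ?thesis .
qed

text \<open>\<open>L\<close> need only be linear on the subspaces \<open>V x\<close> containing the values, so that a module
  morphism defined on the \<open>\<Theta>\<close>-components alone can be used.\<close>

lemma fam_rebase:
  assumes vsS: "vector_space sS"
    and okJ: "admissible (J::'j set) srcJ (\<lambda>_. y) morJ"
    and V: "\<And>j. j \<in> J \<Longrightarrow> valJ j \<in> V (srcJ j)"
    and L: "\<And>a (S::'j set) k v. finite S \<Longrightarrow> (\<And>s. s \<in> S \<Longrightarrow> v s \<in> V a) \<Longrightarrow>
              L a (\<Sum>s\<in>S. sR (k s) (v s)) = (\<Sum>s\<in>S. sS (k s) (L a (v s)))"
  shows "fam sS (basis_triples_into y) fst (\<lambda>_. y) (\<lambda>i. snd (snd i))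
           (\<lambda>i. L (fst i) (\<Sum>j\<in>{j\<in>J. srcJ j = fst i}. sR (coord (fst i) y (snd (snd i)) (morJ j)) (valJ j)))
       = fam sS J srcJ (\<lambda>_. y) morJ (\<lambda>j. L (srcJ j) (valJ j))"
proof
  fix c
  show "fam sS (basis_triples_into y) fst (\<lambda>_. y) (\<lambda>i. snd (snd i))
           (\<lambda>i. L (fst i) (\<Sum>j\<in>{j\<in>J. srcJ j = fst i}. sR (coord (fst i) y (snd (snd i)) (morJ j)) (valJ j))) c
       = fam sS J srcJ (\<lambda>_. y) morJ (\<lambda>j. L (srcJ j) (valJ j)) c"
  proof (cases "c \<in> Cset sM Hom")
    case True
    have "{i\<in>basis_triples_into y. fst i = a} = (\<lambda>g. (a, y, g)) ` basis a y" for a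
      unfolding basis_triples_into_def by force
    moreover have "inj_on (\<lambda>g. (a, y, g)) (basis a y)" for a
      by (rule inj_onI) simp
    moreover have "L a (\<Sum>j\<in>{j\<in>J. srcJ j = a}. sR (coord a y g (morJ j)) (valJ j))
        = (\<Sum>j\<in>{j\<in>J. srcJ j = a}. sS (coord a y g (morJ j)) (L a (valJ j)))" for a g
      using admissible_finite[OF okJ, of a y] V by (intro L) auto
    ultimately show ?thesis
      unfolding fam_into_by_source[OF admissible_basis_triples_into True] fam_into_by_source[OF okJ True]
      by (simp add: sum.reindex dualsp_regroup[OF vsS Cset_dualsp[OF True]])
  qed (simp add: fam_outside)
qed

lemma fam_cdelta:
  assumes ok: "admissible I src tgt mor" and \<phi>: "\<phi> \<in> dualsp sM (Hom x y)"
  shows "fam sR I src tgt mor val (cdelta x y \<phi>) = (\<Sum>i\<in>{i\<in>I. src i = x \<and> tgt i = y}. sR (\<phi> (mor i)) (val i))"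
proof -
  have "fam sR I src tgt mor val (cdelta x y \<phi>)
      = (\<Sum>i\<in>{i\<in>I. (src i, tgt i) \<in> {(x, y)}}. sR (cdelta x y \<phi> (src i) (tgt i) (mor i)) (val i))"
    by (rule fam_over_superset[OF ok cdelta_in_Cset[OF \<phi>] _ csupp_cdelta]) simp
  then show ?thesis
    by (simp add: cdelta_def)
qed

lemma comult_fam_fam_component:
  assumes okI: "admissible I src tgt mor"
    and okJ: "\<And>i. i \<in> I \<Longrightarrow> admissible (J i) (srcJ i) (tgtJ i) (morJ i)" and c: "c \<in> Cset sM Hom"
  shows "(\<Sum>g\<in>basis x z. \<Sum>h\<in>basis z y. sR (c x y (cmp x z y h g))
            (fam sR I src tgt mor (\<lambda>i. fam sR (J i) (srcJ i) (tgtJ i) (morJ i) (valJ i) (cdelta x z (coord x z g)))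
               (cdelta z y (coord z y h))))
       = (\<Sum>i\<in>{i\<in>I. src i = z \<and> tgt i = y}. \<Sum>j\<in>{j\<in>J i. srcJ i j = x \<and> tgtJ i j = z}.
            sR (c x y (cmp x z y (mor i) (morJ i j))) (valJ i j))"
proof -
  let ?Iz = "{i\<in>I. src i = z \<and> tgt i = y}" and ?Jx = "\<lambda>i. {j\<in>J i. srcJ i j = x \<and> tgtJ i j = z}"
  let ?k = "\<lambda>g h i j. c x y (cmp x z y h g) * (coord z y h (mor i) * coord x z g (morJ i j))"
  have inner: "fam sR (J i) (srcJ i) (tgtJ i) (morJ i) (valJ i) (cdelta x z (coord x z g))
      = (\<Sum>j\<in>?Jx i. sR (coord x z g (morJ i j)) (valJ i j))" if "i \<in> I" for i g
    by (rule fam_cdelta[OF okJ[OF that] coord_in_dualsp])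
  have "(\<Sum>g\<in>basis x z. \<Sum>h\<in>basis z y. sR (c x y (cmp x z y h g))
            (fam sR I src tgt mor (\<lambda>i. fam sR (J i) (srcJ i) (tgtJ i) (morJ i) (valJ i) (cdelta x z (coord x z g)))
               (cdelta z y (coord z y h))))
      = (\<Sum>g\<in>basis x z. \<Sum>h\<in>basis z y. \<Sum>i\<in>?Iz. \<Sum>j\<in>?Jx i. sR (?k g h i j) (valJ i j))"
    by (simp add: fam_cdelta[OF okI coord_in_dualsp] inner R.scale_sum_right)
  also have "\<dots> = (\<Sum>i\<in>?Iz. \<Sum>j\<in>?Jx i. \<Sum>g\<in>basis x z. \<Sum>h\<in>basis z y. sR (?k g h i j) (valJ i j))"
    by (rule trans[OF sum.cong[OF refl sum_swap_nested] sum_swap_nested])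
  also have "\<dots> = (\<Sum>i\<in>?Iz. \<Sum>j\<in>?Jx i. sR (\<Sum>g\<in>basis x z. \<Sum>h\<in>basis z y. ?k g h i j) (valJ i j))"
    by (simp add: R.scale_sum_left)
  also have "\<dots> = (\<Sum>i\<in>?Iz. \<Sum>j\<in>?Jx i. sR (c x y (cmp x z y (mor i) (morJ i j))) (valJ i j))"
  proof (intro sum.cong refl)
    fix i j
    assume "i \<in> ?Iz" "j \<in> ?Jx i"
    then have "mor i \<in> Hom z y" "morJ i j \<in> Hom x z"
      using admissible_Hom[OF okI] admissible_Hom[OF okJ] by fastforce+
    then show "sR (\<Sum>g\<in>basis x z. \<Sum>h\<in>basis z y. ?k g h i j) (valJ i j) = sR (c x y (cmp x z y (mor i) (morJ i j))) (valJ i j)"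
      by (simp add: dualsp_cmp_expansion[OF Cset_dualsp[OF c]])
  qed
  finally show ?thesis .
qed

text \<open>Terms whose middle object lies outside the interval between \<open>x\<close> and \<open>y\<close> vanish, so the
  sum over middle objects in \<open>comult_comp\<close> collects all composable pairs.\<close>

lemma comult_fam_fam_middle:
  assumes okI: "admissible I src tgt mor" and okJ: "\<And>i. i \<in> I \<Longrightarrow> admissible (J i) (srcJ i) (tgtJ i) (morJ i)"
    and c: "c \<in> Cset sM Hom"
    and K: "K = {k. fst k \<in> I \<and> snd k \<in> J (fst k) \<and> tgtJ (fst k) (snd k) = src (fst k)}"
    and finK: "finite {k\<in>K. srcJ (fst k) (snd k) = x \<and> tgt (fst k) = y}"
  shows "(\<Sum>z\<in>{z. precle Hom x z \<and> precle Hom z y}. \<Sum>i\<in>{i\<in>I. src i = z \<and> tgt i = y}.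
            \<Sum>j\<in>{j\<in>J i. srcJ i j = x \<and> tgtJ i j = z}. sR (c x y (cmp x z y (mor i) (morJ i j))) (valJ i j))
       = (\<Sum>k\<in>{k\<in>K. srcJ (fst k) (snd k) = x \<and> tgt (fst k) = y}.
            sR (c x y (cmp (srcJ (fst k) (snd k)) (src (fst k)) (tgt (fst k)) (mor (fst k)) (morJ (fst k) (snd k))))
               (valJ (fst k) (snd k)))"
    (is "?L = (\<Sum>k\<in>?Kxy. ?t k)")
proof -
  let ?Z = "{z. precle Hom x z \<and> precle Hom z y}"
  let ?K' = "{k\<in>?Kxy. src (fst k) \<in> ?Z}"
  have "?t k = 0" if k: "k \<in> ?Kxy - ?K'" for k
  proof -
    have "mor (fst k) \<in> Hom (src (fst k)) y" "morJ (fst k) (snd k) \<in> Hom x (src (fst k))"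
      using k K admissible_Hom[OF okI] admissible_Hom[OF okJ] by force+
    moreover have "src (fst k) \<notin> ?Z" "srcJ (fst k) (snd k) = x" "tgt (fst k) = y"
      using k by auto
    ultimately have "cmp x (src (fst k)) y (mor (fst k)) (morJ (fst k) (snd k)) = 0"
      using precle_if_cmp_nonzero by blast
    then show ?thesis
      using k dualsp_zero[OF Cset_dualsp[OF c]] by simp
  qed
  then have "(\<Sum>k\<in>?Kxy. ?t k) = (\<Sum>k\<in>?K'. ?t k)"
    by (intro sum.mono_neutral_right[OF finK]) auto
  also have "\<dots> = (\<Sum>z\<in>?Z. \<Sum>k\<in>{k. k \<in> ?K' \<and> src (fst k) = z}. ?t k)"
    by (rule sum.group[symmetric]) (auto intro: finite_subset[OF _ finK] finite_interval)
  also have "\<dots> = ?L"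
  proof (rule sum.cong[OF refl])
    fix z
    assume z: "z \<in> ?Z"
    let ?A = "{i\<in>I. src i = z \<and> tgt i = y}" and ?B = "\<lambda>i. {j\<in>J i. srcJ i j = x \<and> tgtJ i j = z}"
    have "{k. k \<in> ?K' \<and> src (fst k) = z} = Sigma ?A ?B"
      using z K by auto
    then have "(\<Sum>k\<in>{k. k \<in> ?K' \<and> src (fst k) = z}. ?t k)
        = (\<Sum>(i, j)\<in>Sigma ?A ?B. sR (c x y (cmp x z y (mor i) (morJ i j))) (valJ i j))"
      by (auto intro!: sum.cong)
    also have "\<dots> = (\<Sum>i\<in>?A. \<Sum>j\<in>?B i. sR (c x y (cmp x z y (mor i) (morJ i j))) (valJ i j))"
      using admissible_finite[OF okI] admissible_finite[OF okJ] by (subst sum.Sigma) auto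
    finally show "(\<Sum>k\<in>{k. k \<in> ?K' \<and> src (fst k) = z}. ?t k)
        = (\<Sum>i\<in>?A. \<Sum>j\<in>?B i. sR (c x y (cmp x z y (mor i) (morJ i j))) (valJ i j))" .
  qed
  finally show ?thesis
    by simp
qed

end

context kcategory_space
begin

lemma homC_add: "f \<in> homC sM Hom sR \<Longrightarrow> g \<in> homC sM Hom sR \<Longrightarrow> (\<lambda>c. f c + g c) \<in> homC sM Hom sR"
  unfolding homC_def by (auto simp: R.scale_right_distrib)

lemma homC_scale: "f \<in> homC sM Hom sR \<Longrightarrow> (\<lambda>c. sR a (f c)) \<in> homC sM Hom sR"
  unfolding homC_def by (auto simp: R.scale_right_distrib mult.commute)

lemma homC_zero: "(\<lambda>c. 0) \<in> homC sM Hom sR"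
  unfolding homC_def by auto

lemma homC_sum:
  "finite S \<Longrightarrow> (\<And>s. s \<in> S \<Longrightarrow> f s \<in> homC sM Hom sR) \<Longrightarrow> (\<lambda>c. \<Sum>s\<in>S. f s c) \<in> homC sM Hom sR"
  by (induction S rule: finite_induct) (simp_all add: homC_zero homC_add)

lemma fam_fam_in_homCC:
  assumes okI: "admissible I src tgt mor" and okJ: "\<And>i. i \<in> I \<Longrightarrow> admissible (J i) (srcJ i) (tgtJ i) (morJ i)"
  shows "(\<lambda>c e. fam sR I src tgt mor (\<lambda>i. fam sR (J i) (srcJ i) (tgtJ i) (morJ i) (valJ i) e) c) \<in> homCC sM Hom sR"
  unfolding homCC_def mem_Collect_eq
proof (intro conjI ballI allI impI)
  fix c
  assume c: "c \<in> Cset sM Hom"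
  have "(\<lambda>e. \<Sum>i\<in>{i\<in>I. (src i, tgt i) \<in> csupp c}.
      sR (c (src i) (tgt i) (mor i)) (fam sR (J i) (srcJ i) (tgtJ i) (morJ i) (valJ i) e)) \<in> homC sM Hom sR"
    using okJ by (intro homC_sum homC_scale fam_in_homC admissible_finite_pairs[OF okI finite_csupp[OF c]]) auto
  then show "(\<lambda>e. fam sR I src tgt mor (\<lambda>i. fam sR (J i) (srcJ i) (tgtJ i) (morJ i) (valJ i) e) c) \<in> homC sM Hom sR"
    using c by (simp add: fam_def)
next
  fix c d
  assume "c \<in> Cset sM Hom" "d \<in> Cset sM Hom"
  then show "(\<lambda>e. fam sR I src tgt mor (\<lambda>i. fam sR (J i) (srcJ i) (tgtJ i) (morJ i) (valJ i) e) (cadd c d))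
      = (\<lambda>e. fam sR I src tgt mor (\<lambda>i. fam sR (J i) (srcJ i) (tgtJ i) (morJ i) (valJ i) e) c
           + fam sR I src tgt mor (\<lambda>i. fam sR (J i) (srcJ i) (tgtJ i) (morJ i) (valJ i) e) d)"
    using fam_in_homC[OF okI] unfolding homC_def by blast
next
  fix a c
  assume "c \<in> Cset sM Hom"
  then show "(\<lambda>e. fam sR I src tgt mor (\<lambda>i. fam sR (J i) (srcJ i) (tgtJ i) (morJ i) (valJ i) e) (cscale a c))
      = (\<lambda>e. sR a (fam sR I src tgt mor (\<lambda>i. fam sR (J i) (srcJ i) (tgtJ i) (morJ i) (valJ i) e) c))"
    using fam_in_homC[OF okI] unfolding homC_def by blast
qed (simp add: fam_outside)

lemma comult_comp_fam_fam:
  assumes okI: "admissible I src tgt mor" and okJ: "\<And>i. i \<in> I \<Longrightarrow> admissible (J i) (srcJ i) (tgtJ i) (morJ i)"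
    and K: "K = {k. fst k \<in> I \<and> snd k \<in> J (fst k) \<and> tgtJ (fst k) (snd k) = src (fst k)}"
    and finK: "\<And>a b. finite {k\<in>K. srcJ (fst k) (snd k) = a \<and> tgt (fst k) = b}"
  shows "comult_comp sM Hom cmp sR (\<lambda>c e. fam sR I src tgt mor (\<lambda>i. fam sR (J i) (srcJ i) (tgtJ i) (morJ i) (valJ i) e) c)
       = fam sR K (\<lambda>k. srcJ (fst k) (snd k)) (\<lambda>k. tgt (fst k))
           (\<lambda>k. cmp (srcJ (fst k) (snd k)) (src (fst k)) (tgt (fst k)) (mor (fst k)) (morJ (fst k) (snd k)))
           (\<lambda>k. valJ (fst k) (snd k))" (is "_ = fam sR K ?sK ?tK ?mK ?vK")
proof
  fix c
  show "comult_comp sM Hom cmp sR (\<lambda>c e. fam sR I src tgt mor (\<lambda>i. fam sR (J i) (srcJ i) (tgtJ i) (morJ i) (valJ i) e) c) c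
      = fam sR K ?sK ?tK ?mK ?vK c"
  proof (cases "c \<in> Cset sM Hom")
    case True
    have okK: "admissible K ?sK ?tK ?mK"
      by (rule admissible_composites[OF okI okJ K finK])
    have "comult_comp sM Hom cmp sR (\<lambda>c e. fam sR I src tgt mor (\<lambda>i. fam sR (J i) (srcJ i) (tgtJ i) (morJ i) (valJ i) e) c) c
        = (\<Sum>(x, y)\<in>csupp c. \<Sum>k\<in>{k\<in>K. ?sK k = x \<and> ?tK k = y}. sR (c x y (?mK k)) (?vK k))"
      unfolding comult_comp_def if_P[OF True]
      by (intro sum.cong refl, clarify)
        (simp only: comult_fam_fam_component[OF okI okJ True] comult_fam_fam_middle[OF okI okJ True K finK])
    also have "\<dots> = (\<Sum>p\<in>csupp c. \<Sum>k\<in>{k. k \<in> {k\<in>K. (?sK k, ?tK k) \<in> csupp c} \<and> (?sK k, ?tK k) = p}.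
        sR (c (?sK k) (?tK k) (?mK k)) (?vK k))"
    proof (intro sum.cong refl, clarify)
      fix x y
      assume "(x, y) \<in> csupp c"
      then have e: "{k. k \<in> {k\<in>K. (?sK k, ?tK k) \<in> csupp c} \<and> (?sK k, ?tK k) = (x, y)} = {k\<in>K. ?sK k = x \<and> ?tK k = y}"
        by auto
      show "(\<Sum>k\<in>{k\<in>K. ?sK k = x \<and> ?tK k = y}. sR (c x y (?mK k)) (?vK k))
          = (\<Sum>k\<in>{k. k \<in> {k\<in>K. (?sK k, ?tK k) \<in> csupp c} \<and> (?sK k, ?tK k) = (x, y)}.
               sR (c (?sK k) (?tK k) (?mK k)) (?vK k))"
        unfolding e by (rule sum.cong) auto
    qed
    also have "\<dots> = fam sR K ?sK ?tK ?mK ?vK c"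
      unfolding fam_def if_P[OF True]
      by (rule sum.group[OF admissible_finite_pairs[OF okK finite_csupp[OF True]] finite_csupp[OF True]]) auto
    finally show ?thesis .
  qed (simp add: comult_comp_def fam_outside)
qed

end

section \<open>Contramodules\<close>

lemma contramodule_vector_space: "contramodule sM Hom cmp idm sP \<pi> \<Longrightarrow> vector_space sP"
  by (simp add: contramodule_def)

locale contramod = kcategory_space sM Hom cmp idm sP
  for sM :: "'k::field \<Rightarrow> 'm::ab_group_add \<Rightarrow> 'm" and Hom :: "'o \<Rightarrow> 'o \<Rightarrow> 'm set"
    and cmp :: "'o \<Rightarrow> 'o \<Rightarrow> 'o \<Rightarrow> 'm \<Rightarrow> 'm \<Rightarrow> 'm" and idm :: "'o \<Rightarrow> 'm"
    and sP :: "'k \<Rightarrow> 'p::ab_group_add \<Rightarrow> 'p" +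
  fixes \<pi> :: "(('o \<Rightarrow> 'o \<Rightarrow> 'm \<Rightarrow> 'k) \<Rightarrow> 'p) \<Rightarrow> 'p"
  assumes contra: "contramodule sM Hom cmp idm sP \<pi>"
begin

lemma pi_add: "f \<in> homC sM Hom sP \<Longrightarrow> g \<in> homC sM Hom sP \<Longrightarrow> \<pi> (\<lambda>c. f c + g c) = \<pi> f + \<pi> g"
  using contra unfolding contramodule_def by blast

lemma pi_scale: "f \<in> homC sM Hom sP \<Longrightarrow> \<pi> (\<lambda>c. sP a (f c)) = sP a (\<pi> f)"
  using contra unfolding contramodule_def by blast

lemma pi_counit: "\<pi> (\<lambda>c. if c \<in> Cset sM Hom then sP (counit idm c) p else 0) = p"
  using contra unfolding contramodule_def by blast

lemma pi_comult:
  "F \<in> homCC sM Hom sP \<Longrightarrow> \<pi> (\<lambda>c. if c \<in> Cset sM Hom then \<pi> (F c) else 0) = \<pi> (comult_comp sM Hom cmp sP F)"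
  using contra unfolding contramodule_def by blast

lemma pi_zero: "\<pi> (\<lambda>c. 0) = 0"
  using pi_add[OF homC_zero homC_zero] by simp

lemma pi_sum: "finite S \<Longrightarrow> (\<And>s. s \<in> S \<Longrightarrow> f s \<in> homC sM Hom sP) \<Longrightarrow> \<pi> (\<lambda>c. \<Sum>s\<in>S. f s c) = (\<Sum>s\<in>S. \<pi> (f s))"
  by (induction S rule: finite_induct) (simp_all add: pi_zero pi_add homC_sum)

lemma fam_pi_vals:
  assumes okI: "admissible I src tgt mor" and okJ: "\<And>i. i \<in> I \<Longrightarrow> admissible (J i) (srcJ i) (tgtJ i) (morJ i)"
  shows "fam sP I src tgt mor (\<lambda>i. \<pi> (fam sP (J i) (srcJ i) (tgtJ i) (morJ i) (valJ i)))
    = (\<lambda>c. if c \<in> Cset sM Hom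
           then \<pi> (\<lambda>e. fam sP I src tgt mor (\<lambda>i. fam sP (J i) (srcJ i) (tgtJ i) (morJ i) (valJ i) e) c) else 0)"
proof
  fix c
  show "fam sP I src tgt mor (\<lambda>i. \<pi> (fam sP (J i) (srcJ i) (tgtJ i) (morJ i) (valJ i))) c
      = (if c \<in> Cset sM Hom
         then \<pi> (\<lambda>e. fam sP I src tgt mor (\<lambda>i. fam sP (J i) (srcJ i) (tgtJ i) (morJ i) (valJ i) e) c) else 0)"
  proof (cases "c \<in> Cset sM Hom")
    case True
    let ?S = "{i\<in>I. (src i, tgt i) \<in> csupp c}"
    have fin: "finite ?S"
      by (rule admissible_finite_pairs[OF okI finite_csupp[OF True]])
    have "\<pi> (\<lambda>e. \<Sum>i\<in>?S. sP (c (src i) (tgt i) (mor i)) (fam sP (J i) (srcJ i) (tgtJ i) (morJ i) (valJ i) e))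
        = (\<Sum>i\<in>?S. \<pi> (\<lambda>e. sP (c (src i) (tgt i) (mor i)) (fam sP (J i) (srcJ i) (tgtJ i) (morJ i) (valJ i) e)))"
      by (rule pi_sum[OF fin]) (use okJ in \<open>auto intro: homC_scale fam_in_homC\<close>)
    also have "\<dots> = (\<Sum>i\<in>?S. sP (c (src i) (tgt i) (mor i)) (\<pi> (fam sP (J i) (srcJ i) (tgtJ i) (morJ i) (valJ i))))"
      by (intro sum.cong refl pi_scale fam_in_homC) (use okJ in auto)
    finally show ?thesis
      using True by (simp add: fam_def[of sP I])
  qed (simp add: fam_outside)
qed

lemma pi_fam_assoc:
  assumes okI: "admissible I src tgt mor" and okJ: "\<And>i. i \<in> I \<Longrightarrow> admissible (J i) (srcJ i) (tgtJ i) (morJ i)"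
    and K: "K = {k. fst k \<in> I \<and> snd k \<in> J (fst k) \<and> tgtJ (fst k) (snd k) = src (fst k)}"
    and finK: "\<And>a b. finite {k\<in>K. srcJ (fst k) (snd k) = a \<and> tgt (fst k) = b}"
  shows "\<pi> (fam sP I src tgt mor (\<lambda>i. \<pi> (fam sP (J i) (srcJ i) (tgtJ i) (morJ i) (valJ i))))
       = \<pi> (fam sP K (\<lambda>k. srcJ (fst k) (snd k)) (\<lambda>k. tgt (fst k))
              (\<lambda>k. cmp (srcJ (fst k) (snd k)) (src (fst k)) (tgt (fst k)) (mor (fst k)) (morJ (fst k) (snd k)))
              (\<lambda>k. valJ (fst k) (snd k)))"
proof -
  let ?F = "\<lambda>c e. fam sP I src tgt mor (\<lambda>i. fam sP (J i) (srcJ i) (tgtJ i) (morJ i) (valJ i) e) c"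
  have "?F \<in> homCC sM Hom sP"
    by (rule fam_fam_in_homCC[OF okI okJ])
  then have "\<pi> (\<lambda>c. if c \<in> Cset sM Hom then \<pi> (?F c) else 0) = \<pi> (comult_comp sM Hom cmp sP ?F)"
    by (rule pi_comult)
  also have "comult_comp sM Hom cmp sP ?F = fam sP K (\<lambda>k. srcJ (fst k) (snd k)) (\<lambda>k. tgt (fst k))
      (\<lambda>k. cmp (srcJ (fst k) (snd k)) (src (fst k)) (tgt (fst k)) (mor (fst k)) (morJ (fst k) (snd k)))
      (\<lambda>k. valJ (fst k) (snd k))"
    by (rule comult_comp_fam_fam[OF okI okJ K finK])
  finally show ?thesis
    by (subst fam_pi_vals[OF okI]) (use okJ in auto)
qed

end

context contramod
begin

abbreviation act :: "'o \<Rightarrow> 'o \<Rightarrow> 'm \<Rightarrow> 'p \<Rightarrow> 'p" where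
  "act x y f p \<equiv> cact sM Hom sP \<pi> (evf x y f) p"

abbreviation proj :: "'o \<Rightarrow> 'p \<Rightarrow> 'p" where
  "proj x p \<equiv> cact sM Hom sP \<pi> (eobj idm x) p"

abbreviation Theta :: "'o \<Rightarrow> 'p set" where
  "Theta y \<equiv> Theta_obj sM Hom idm sP \<pi> y"

lemma proj_eq_act: "proj x p = act x x (idm x) p"
  unfolding eobj_def ..

lemma act_eq_pi_fam: "act x y f p = \<pi> (fam sP {()} (\<lambda>_. x) (\<lambda>_. y) (\<lambda>_. f) (\<lambda>_. p))"
  unfolding cact_def evf_def fam_singleton by simp

lemma act_act:
  assumes f: "f \<in> Hom x y'" and h: "h \<in> Hom y z"
  shows "act y z h (act x y' f p) = (if y' = y then act x z (cmp x y z h f) p else 0)"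
proof -
  have "act y z h (act x y' f p)
      = \<pi> (fam sP {k. fst k \<in> {()} \<and> snd k \<in> {()} \<and> y' = y} (\<lambda>k. x) (\<lambda>k. z) (\<lambda>k. cmp x y z h f) (\<lambda>k. p))"
    unfolding act_eq_pi_fam
    by (rule pi_fam_assoc[where J="\<lambda>_. {()}" and srcJ="\<lambda>_ _. x" and tgtJ="\<lambda>_ _. y'" and morJ="\<lambda>_ _. f"])
      (use assms in \<open>auto intro: admissible_singleton\<close>)
  also have "{k. fst k \<in> {()} \<and> snd k \<in> {()} \<and> y' = y} = (if y' = y then {((), ())} else {})"
    by auto
  finally show ?thesis
    by (cases "y' = y") (simp_all add: act_eq_pi_fam fam_singleton fam_empty pi_zero)
qed

lemma act_comp: "f \<in> Hom x y \<Longrightarrow> h \<in> Hom y z \<Longrightarrow> act y z h (act x y f p) = act x z (cmp x y z h f) p"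
  by (simp add: act_act)

lemma proj_idem: "proj y (proj y p) = proj y p"
  unfolding proj_eq_act using act_comp[OF idm_in_Hom idm_in_Hom] cmp_idm_left[OF idm_in_Hom] by simp

lemma act_outside:
  assumes "f \<notin> Hom x y"
  shows "act x y f p = 0"
proof -
  have "act x y f p = \<pi> (\<lambda>c. 0)" unfolding cact_def evf_def
    by (rule arg_cong[where f=\<pi>]) (auto simp: dualsp_outside[OF Cset_dualsp assms])
  then show ?thesis by (simp add: pi_zero)
qed

lemma act_add: "act x y f (p + q) = act x y f p + act x y f q"
proof (cases "f \<in> Hom x y")
  case True
  have "act x y f (p + q) = \<pi> (\<lambda>c. fam sP {()} (\<lambda>_. x) (\<lambda>_. y) (\<lambda>_. f) (\<lambda>_. p) c + fam sP {()} (\<lambda>_. x) (\<lambda>_. y) (\<lambda>_. f) (\<lambda>_. q) c)"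
    unfolding act_eq_pi_fam fam_add_vals[symmetric] ..
  also have "\<dots> = act x y f p + act x y f q"
    unfolding act_eq_pi_fam by (rule pi_add; rule fam_in_homC; rule admissible_singleton; simp add: True)
  finally show ?thesis .
next
  case False then show ?thesis by (simp add: act_outside)
qed

lemma act_scale: "act x y f (sP a p) = sP a (act x y f p)"
proof (cases "f \<in> Hom x y")
  case True
  have "act x y f (sP a p) = \<pi> (\<lambda>c. sP a (fam sP {()} (\<lambda>_. x) (\<lambda>_. y) (\<lambda>_. f) (\<lambda>_. p) c))"
    unfolding act_eq_pi_fam fam_scale_vals[symmetric] ..
  also have "\<dots> = sP a (act x y f p)"
    unfolding act_eq_pi_fam by (rule pi_scale; rule fam_in_homC; rule admissible_singleton; simp add: True)
  finally show ?thesis .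
next
  case False then show ?thesis by (simp add: act_outside)
qed

lemma act_zero: "act x y f 0 = 0"
  using act_add[of x y f 0 0] by simp

lemma act_diff: "act x y f (p - q) = act x y f p - act x y f q"
  using act_add[of x y f "p - q" q] by simp

lemma proj_add: "proj y (p + q) = proj y p + proj y q"
  unfolding proj_eq_act by (rule act_add)

lemma proj_scale: "proj y (sP a p) = sP a (proj y p)"
  unfolding proj_eq_act by (rule act_scale)

lemma proj_diff: "proj y (p - q) = proj y p - proj y q"
  unfolding proj_eq_act by (rule act_diff)

lemma proj_zero: "proj y 0 = 0"
  unfolding proj_eq_act by (rule act_zero)

lemma Theta_obj_iff: "p \<in> Theta y \<longleftrightarrow> proj y p = p"
proof
  assume "p \<in> Theta y"
  then obtain q where "p = proj y q" unfolding Theta_obj_def by blast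
  then show "proj y p = p" using proj_idem by simp
next
  assume "proj y p = p"
  then show "p \<in> Theta y" unfolding Theta_obj_def by (metis rangeI)
qed

lemma proj_in_Theta: "proj y p \<in> Theta y"
  unfolding Theta_obj_def by simp

lemma Theta_add: "p \<in> Theta y \<Longrightarrow> q \<in> Theta y \<Longrightarrow> p + q \<in> Theta y"
  unfolding Theta_obj_iff by (simp add: proj_add)

lemma Theta_diff: "p \<in> Theta y \<Longrightarrow> q \<in> Theta y \<Longrightarrow> p - q \<in> Theta y"
  unfolding Theta_obj_iff by (simp add: proj_diff)

lemma Theta_scale: "p \<in> Theta y \<Longrightarrow> sP a p \<in> Theta y"
  unfolding Theta_obj_iff by (simp add: proj_scale)

lemma Theta_zero: "0 \<in> Theta y"
  unfolding Theta_obj_iff by (simp add: proj_zero)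

lemma Theta_sum: "(\<And>s. s \<in> S \<Longrightarrow> p s \<in> Theta y) \<Longrightarrow> (\<Sum>s\<in>S. p s) \<in> Theta y"
  by (induction S rule: infinite_finite_induct) (auto simp: Theta_zero Theta_add)

lemma act_in_Theta:
  assumes f: "f \<in> Hom x y"
  shows "act x y f p \<in> Theta y"
  unfolding Theta_obj_iff proj_eq_act using act_comp[OF f idm_in_Hom] cmp_idm_left[OF f] by simp

lemma act_pi_fam:
  assumes ok: "admissible I src tgt mor" and h: "h \<in> Hom y z"
  shows "act y z h (\<pi> (fam sP I src tgt mor val)) = \<pi> (fam sP {i\<in>I. tgt i = y} src (\<lambda>_. z) (\<lambda>i. cmp (src i) y z h (mor i)) val)"
proof -
  let ?K = "{k. fst k \<in> {()} \<and> snd k \<in> I \<and> tgt (snd k) = y}"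
  have "act y z h (\<pi> (fam sP I src tgt mor val)) = \<pi> (fam sP {()} (\<lambda>_. y) (\<lambda>_. z) (\<lambda>_. h) (\<lambda>_. \<pi> (fam sP I src tgt mor val)))"
    unfolding act_eq_pi_fam ..
  also have "\<dots> = \<pi> (fam sP ?K (\<lambda>k. src (snd k)) (\<lambda>k. z) (\<lambda>k. cmp (src (snd k)) y z h (mor (snd k))) (\<lambda>k. val (snd k)))"
  proof (rule pi_fam_assoc[where J="\<lambda>_. I" and srcJ="\<lambda>_. src" and tgtJ="\<lambda>_. tgt" and morJ="\<lambda>_. mor" and valJ="\<lambda>_. val"])
    show "admissible {()} (\<lambda>_. y) (\<lambda>_. z) (\<lambda>_. h)" by (rule admissible_singleton) (simp add: h)
    show "\<And>i. i \<in> {()} \<Longrightarrow> admissible I src tgt mor" by (rule ok)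
    show "?K = {k. fst k \<in> {()} \<and> snd k \<in> I \<and> tgt (snd k) = y}" ..
    fix a b
    have "{k \<in> ?K. src (snd k) = a \<and> z = b} \<subseteq> (\<lambda>i. ((), i)) ` {i\<in>I. src i = a \<and> tgt i = y}"
      by (auto simp: image_iff)
    then show "finite {k \<in> ?K. src (snd k) = a \<and> z = b}"
      by (rule finite_subset) (use admissible_finite[OF ok] in blast)
  qed
  also have "?K = (\<lambda>i. ((), i)) ` {i\<in>I. tgt i = y}" by (auto simp: image_iff)
  also have "fam sP ((\<lambda>i. ((), i)) ` {i\<in>I. tgt i = y}) (\<lambda>k. src (snd k)) (\<lambda>k. z) (\<lambda>k. cmp (src (snd k)) y z h (mor (snd k))) (\<lambda>k. val (snd k))
     = fam sP {i\<in>I. tgt i = y} src (\<lambda>_. z) (\<lambda>i. cmp (src i) y z h (mor i)) val"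
    by (subst fam_reindex) (auto simp: inj_on_def comp_def)
  finally show ?thesis .
qed

lemma proj_pi_fam:
  assumes ok: "admissible I src tgt mor"
  shows "proj y (\<pi> (fam sP I src tgt mor val)) = \<pi> (fam sP {i\<in>I. tgt i = y} src tgt mor val)"
proof -
  have "proj y (\<pi> (fam sP I src tgt mor val)) = \<pi> (fam sP {i\<in>I. tgt i = y} src (\<lambda>_. y) (\<lambda>i. cmp (src i) y y (idm y) (mor i)) val)"
    unfolding proj_eq_act by (rule act_pi_fam[OF ok idm_in_Hom])
  also have "\<dots> = \<pi> (fam sP {i\<in>I. tgt i = y} src tgt mor val)"
    by (rule arg_cong[where f=\<pi>], rule fam_cong) (use admissible_Hom[OF ok] cmp_idm_left in auto)
  finally show ?thesis .
qed

lemma pi_fam_in_Theta: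
  assumes ok: "admissible I src tgt mor" and t: "\<And>i. i \<in> I \<Longrightarrow> tgt i = y"
  shows "\<pi> (fam sP I src tgt mor val) \<in> Theta y"
  unfolding Theta_obj_iff proj_pi_fam[OF ok] using t by (metis (mono_tags, lifting) Collect_cong Collect_mem_eq)

lemma pi_fam_proj_vals:
  assumes ok: "admissible I src tgt mor"
  shows "\<pi> (fam sP I src tgt mor (\<lambda>i. proj (src i) (val i))) = \<pi> (fam sP I src tgt mor val)"
proof -
  let ?K = "{k. fst k \<in> I \<and> snd k \<in> {()} \<and> src (fst k) = src (fst k)}"
  have "\<pi> (fam sP I src tgt mor (\<lambda>i. proj (src i) (val i)))
      = \<pi> (fam sP I src tgt mor (\<lambda>i. \<pi> (fam sP {()} (\<lambda>_. src i) (\<lambda>_. src i) (\<lambda>_. idm (src i)) (\<lambda>_. val i))))"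
    unfolding proj_eq_act act_eq_pi_fam ..
  also have "\<dots> = \<pi> (fam sP ?K (\<lambda>k. src (fst k)) (\<lambda>k. tgt (fst k)) (\<lambda>k. cmp (src (fst k)) (src (fst k)) (tgt (fst k)) (mor (fst k)) (idm (src (fst k)))) (\<lambda>k. val (fst k)))"
  proof (rule pi_fam_assoc[where J="\<lambda>_. {()}" and srcJ="\<lambda>i _. src i" and tgtJ="\<lambda>i _. src i" and morJ="\<lambda>i _. idm (src i)" and valJ="\<lambda>i _. val i"])
    show "admissible I src tgt mor" by (rule ok)
    show "\<And>i. i \<in> I \<Longrightarrow> admissible {()} (\<lambda>_. src i) (\<lambda>_. src i) (\<lambda>_. idm (src i))" by (rule admissible_singleton) (simp add: idm_in_Hom)
    show "?K = {k. fst k \<in> I \<and> snd k \<in> {()} \<and> src (fst k) = src (fst k)}" ..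
    fix a b
    have "{k \<in> ?K. src (fst k) = a \<and> tgt (fst k) = b} \<subseteq> (\<lambda>i. (i, ())) ` {i\<in>I. src i = a \<and> tgt i = b}"
      by (auto simp: image_iff)
    then show "finite {k \<in> ?K. src (fst k) = a \<and> tgt (fst k) = b}"
      by (rule finite_subset) (use admissible_finite[OF ok] in blast)
  qed
  also have "?K = (\<lambda>i. (i, ())) ` I" by (auto simp: image_iff)
  also have "fam sP ((\<lambda>i. (i, ())) ` I) (\<lambda>k. src (fst k)) (\<lambda>k. tgt (fst k)) (\<lambda>k. cmp (src (fst k)) (src (fst k)) (tgt (fst k)) (mor (fst k)) (idm (src (fst k)))) (\<lambda>k. val (fst k))
     = fam sP I src tgt mor val"
    by (subst fam_reindex) (auto simp: inj_on_def comp_def cmp_idm_right admissible_Hom[OF ok] intro!: fam_cong)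
  finally show ?thesis .
qed

abbreviation objfam :: "('o \<Rightarrow> 'p) \<Rightarrow> ('o \<Rightarrow> 'o \<Rightarrow> 'm \<Rightarrow> 'k) \<Rightarrow> 'p" where
  "objfam v \<equiv> fam sP UNIV (\<lambda>x. x) (\<lambda>x. x) idm v"

lemma admissible_objects: "admissible UNIV (\<lambda>x. x) (\<lambda>x. x) idm"
  by (rule admissibleI) (auto simp: idm_in_Hom)

lemma pi_objfam_proj: "\<pi> (objfam (\<lambda>x. proj x p)) = p"
proof -
  have "objfam (\<lambda>_. p) = (\<lambda>c. if c \<in> Cset sM Hom then sP (counit idm c) p else 0)"
    unfolding fam_def counit_def by (auto simp: fun_eq_iff R.scale_sum_left)
  then show ?thesis
    using pi_fam_proj_vals[OF admissible_objects, of "\<lambda>_. p"] pi_counit by simp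
qed

lemma pi_fam_pi_objfam:
  assumes ok: "admissible I src tgt mor"
  shows "\<pi> (fam sP I src tgt mor (\<lambda>i. \<pi> (objfam (w i)))) = \<pi> (fam sP I src tgt mor (\<lambda>i. w i (src i)))"
proof -
  let ?K = "{k. fst k \<in> I \<and> snd k \<in> UNIV \<and> snd k = src (fst k)}"
  have "\<pi> (fam sP I src tgt mor (\<lambda>i. \<pi> (objfam (w i))))
      = \<pi> (fam sP ?K snd (\<lambda>k. tgt (fst k)) (\<lambda>k. cmp (snd k) (src (fst k)) (tgt (fst k)) (mor (fst k)) (idm (snd k)))
          (\<lambda>k. w (fst k) (snd k)))"
  proof (rule pi_fam_assoc[OF ok admissible_objects refl])
    have "{k \<in> ?K. snd k = a \<and> tgt (fst k) = b} \<subseteq> (\<lambda>i. (i, a)) ` {i\<in>I. src i = a \<and> tgt i = b}" for a b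
      by auto
    then show "finite {k \<in> ?K. snd k = a \<and> tgt (fst k) = b}" for a b
      using admissible_finite[OF ok] by (rule finite_subset[OF _ finite_imageI])
  qed
  also have "?K = (\<lambda>i. (i, src i)) ` I"
    by auto
  also have "fam sP ((\<lambda>i. (i, src i)) ` I) snd (\<lambda>k. tgt (fst k))
      (\<lambda>k. cmp (snd k) (src (fst k)) (tgt (fst k)) (mor (fst k)) (idm (snd k))) (\<lambda>k. w (fst k) (snd k))
      = fam sP I src tgt mor (\<lambda>i. w i (src i))"
    by (subst fam_reindex) (auto simp: inj_on_def cmp_idm_right admissible_Hom[OF ok] intro!: fam_cong)
  finally show ?thesis .
qed

lemma pi_objfam_collect:
  assumes ok: "admissible I src tgt mor"
  shows "\<pi> (objfam (\<lambda>y. \<pi> (fam sP {i\<in>I. tgt i = y} src (\<lambda>_. y) mor val))) = \<pi> (fam sP I src tgt mor val)"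
proof -
  let ?K = "{k. fst k \<in> UNIV \<and> snd k \<in> {i\<in>I. tgt i = fst k} \<and> fst k = fst k}"
  have "\<pi> (objfam (\<lambda>y. \<pi> (fam sP {i\<in>I. tgt i = y} src (\<lambda>_. y) mor val)))
      = \<pi> (fam sP ?K (\<lambda>k. src (snd k)) fst (\<lambda>k. cmp (src (snd k)) (fst k) (fst k) (idm (fst k)) (mor (snd k)))
          (\<lambda>k. val (snd k)))"
  proof (rule pi_fam_assoc[OF admissible_objects _ refl])
    show "admissible {i\<in>I. tgt i = y} src (\<lambda>_. y) mor" for y
    proof (rule admissibleI)
      show "i \<in> {i\<in>I. tgt i = y} \<Longrightarrow> mor i \<in> Hom (src i) y" for i
        using admissible_Hom[OF ok] by auto
      show "finite {i \<in> {i\<in>I. tgt i = y}. src i = a \<and> y = b}" for a b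
        by (rule finite_subset[OF _ admissible_finite[OF ok, of a y]]) auto
    qed
    have "{k \<in> ?K. src (snd k) = a \<and> fst k = b} \<subseteq> (\<lambda>i. (b, i)) ` {i\<in>I. src i = a \<and> tgt i = b}" for a b
      by auto
    then show "finite {k \<in> ?K. src (snd k) = a \<and> fst k = b}" for a b
      using admissible_finite[OF ok] by (rule finite_subset[OF _ finite_imageI])
  qed
  also have "?K = (\<lambda>i. (tgt i, i)) ` I"
    by auto
  also have "fam sP ((\<lambda>i. (tgt i, i)) ` I) (\<lambda>k. src (snd k)) fst
      (\<lambda>k. cmp (src (snd k)) (fst k) (fst k) (idm (fst k)) (mor (snd k))) (\<lambda>k. val (snd k))
      = fam sP I src tgt mor val"
    by (subst fam_reindex) (auto simp: inj_on_def cmp_idm_left admissible_Hom[OF ok] intro!: fam_cong)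
  finally show ?thesis .
qed

lemma pi_fam_singleton: "\<pi> (fam sP {i} src tgt mor val) = act (src i) (tgt i) (mor i) (val i)"
  unfolding act_eq_pi_fam fam_singleton by simp

lemma pi_fam_finite: assumes fin: "finite I" and ok: "admissible I src tgt mor"
  shows "\<pi> (fam sP I src tgt mor val) = (\<Sum>i\<in>I. act (src i) (tgt i) (mor i) (val i))"
proof -
  have "\<pi> (fam sP I src tgt mor val) = \<pi> (\<lambda>c. \<Sum>i\<in>I. fam sP {i} src tgt mor val c)"
    unfolding fam_finite[OF fin] ..
  also have "\<dots> = (\<Sum>i\<in>I. \<pi> (fam sP {i} src tgt mor val))"
    by (rule pi_sum[OF fin], rule fam_in_homC, rule admissible_singleton, rule admissible_Hom[OF ok])
  finally show ?thesis by (simp add: pi_fam_singleton)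
qed

lemma pi_fam_factor:
  assumes okI: "admissible I src (\<lambda>_. y) mor" and fin: "finite Os"
    and Os: "\<And>ob. ob \<in> Os \<Longrightarrow> snd ob \<in> Hom (fst ob) y"
    and morJ: "\<And>ob i. ob \<in> Os \<Longrightarrow> i \<in> I \<Longrightarrow> morJ ob i \<in> Hom (src i) (fst ob)"
    and split: "\<And>i. i \<in> I \<Longrightarrow> mor i = (\<Sum>ob\<in>Os. cmp (src i) (fst ob) y (snd ob) (morJ ob i))"
  shows "\<pi> (fam sP I src (\<lambda>_. y) mor val)
       = (\<Sum>ob\<in>Os. act (fst ob) y (snd ob) (\<pi> (fam sP I src (\<lambda>_. fst ob) (morJ ob) val)))"
proof -
  let ?K = "{k. fst k \<in> Os \<and> snd k \<in> I \<and> fst (fst k) = fst (fst k)}"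
  let ?mK = "\<lambda>k. cmp (src (snd k)) (fst (fst k)) y (snd (fst k)) (morJ (fst k) (snd k))"
  have okO: "admissible Os fst (\<lambda>_. y) snd"
    using fin Os by (rule admissible_finite_set)
  have okJ: "admissible I src (\<lambda>_. fst ob) (morJ ob)" if "ob \<in> Os" for ob
    using okI morJ[OF that] by (rule admissible_retarget)
  have finK: "finite {k \<in> ?K. src (snd k) = a \<and> y = b}" for a b
    by (rule finite_subset[of _ "Os \<times> {i\<in>I. src i = a \<and> y = y}"])
      (use fin admissible_finite[OF okI, of a y] in \<open>auto intro: finite_cartesian_product\<close>)
  have okK: "admissible ?K (\<lambda>k. src (snd k)) (\<lambda>_. y) ?mK"
    using finK Os morJ by (intro admissibleI cmp_in_Hom) auto
  have fibre: "{k \<in> ?K. snd k = i} = (\<lambda>ob. (ob, i)) ` Os" if "i \<in> I" for i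
    using that by auto
  have "mor i = (\<Sum>k\<in>{k \<in> ?K. snd k = i}. ?mK k)" if "i \<in> I" for i
    unfolding fibre[OF that] split[OF that] by (simp add: sum.reindex inj_on_def)
  then have "fam sP ?K (\<lambda>k. src (snd k)) (\<lambda>_. y) ?mK (\<lambda>k. val (snd k)) = fam sP I src (\<lambda>_. y) mor val"
    by (intro fam_merge[OF okK okI]) auto
  moreover have "\<pi> (fam sP Os fst (\<lambda>_. y) snd (\<lambda>ob. \<pi> (fam sP I src (\<lambda>_. fst ob) (morJ ob) val)))
      = \<pi> (fam sP ?K (\<lambda>k. src (snd k)) (\<lambda>_. y) ?mK (\<lambda>k. val (snd k)))"
    by (rule pi_fam_assoc[OF okO okJ refl finK])
  ultimately show ?thesis
    using pi_fam_finite[OF fin okO] by simp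
qed

end

subsection \<open>A Nakayama lemma\<close>

text \<open>Iterating the decomposition of \<open>d\<^sub>0\<close> gives a tree of paths; local finiteness bounds the
  length of the paths ending at any given object, so the paths form an admissible family.\<close>

locale descent = contramod sM Hom cmp idm sP \<pi>
  for sM :: "'k::field \<Rightarrow> 'm::ab_group_add \<Rightarrow> 'm" and Hom :: "'o \<Rightarrow> 'o \<Rightarrow> 'm set"
    and cmp :: "'o \<Rightarrow> 'o \<Rightarrow> 'o \<Rightarrow> 'm \<Rightarrow> 'm \<Rightarrow> 'm" and idm :: "'o \<Rightarrow> 'm"
    and sP :: "'k \<Rightarrow> 'p::ab_group_add \<Rightarrow> 'p" and \<pi> :: "(('o \<Rightarrow> 'o \<Rightarrow> 'm \<Rightarrow> 'k) \<Rightarrow> 'p) \<Rightarrow> 'p" +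
  fixes D :: "'o \<Rightarrow> 'p set" and lower :: "'o \<Rightarrow> 'p \<Rightarrow> ('o \<times> 'm) set"
    and piece :: "'o \<Rightarrow> 'p \<Rightarrow> 'o \<times> 'm \<Rightarrow> 'p" and y0 :: 'o and d0 :: 'p
  assumes proj_D: "d \<in> D y \<Longrightarrow> proj y d = d"
    and finite_lower: "d \<in> D y \<Longrightarrow> finite (lower y d)"
    and lower_below: "d \<in> D y \<Longrightarrow> ob \<in> lower y d \<Longrightarrow>
        precl Hom (fst ob) y \<and> snd ob \<in> Hom (fst ob) y \<and> piece y d ob \<in> D (fst ob)"
    and decompose: "d \<in> D y \<Longrightarrow> d = (\<Sum>ob\<in>lower y d. act (fst ob) y (snd ob) (piece y d ob))"
    and root: "d0 \<in> D y0"
begin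

primrec path_obj :: "('o \<times> 'm) list \<Rightarrow> 'o" where
  "path_obj [] = y0"
| "path_obj (ob # ps) = fst ob"

primrec path_mor :: "('o \<times> 'm) list \<Rightarrow> 'm" where
  "path_mor [] = idm y0"
| "path_mor (ob # ps) = cmp (fst ob) (path_obj ps) y0 (path_mor ps) (snd ob)"

primrec path_val :: "('o \<times> 'm) list \<Rightarrow> 'p" where
  "path_val [] = d0"
| "path_val (ob # ps) = piece (path_obj ps) (path_val ps) ob"

primrec valid_path :: "('o \<times> 'm) list \<Rightarrow> bool" where
  "valid_path [] = True"
| "valid_path (ob # ps) \<longleftrightarrow> valid_path ps \<and> ob \<in> lower (path_obj ps) (path_val ps)"

lemma valid_path_invariant:
  assumes "valid_path ps"
  shows "path_val ps \<in> D (path_obj ps) \<and> path_mor ps \<in> Hom (path_obj ps) y0 \<and> precle Hom (path_obj ps) y0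
    \<and> length ps \<le> card {z. precle Hom (path_obj ps) z \<and> precle Hom z y0}"
  using assms
proof (induction ps)
  case Nil
  then show ?case
    using root idm_in_Hom precle_refl by simp
next
  case (Cons ob ps)
  let ?Int = "\<lambda>w. {z. precle Hom w z \<and> precle Hom z y0}"
  have IH: "path_val ps \<in> D (path_obj ps)" "path_mor ps \<in> Hom (path_obj ps) y0"
    "precle Hom (path_obj ps) y0" "length ps \<le> card (?Int (path_obj ps))"
    using Cons by auto
  have ob: "precl Hom (fst ob) (path_obj ps)" "snd ob \<in> Hom (fst ob) (path_obj ps)"
    "piece (path_obj ps) (path_val ps) ob \<in> D (fst ob)"
    using lower_below[OF IH(1)] Cons.prems by auto
  have below: "precle Hom (fst ob) (path_obj ps)" and not_above: "\<not> precle Hom (path_obj ps) (fst ob)"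
    using ob(1) unfolding precl_def by auto
  have below_y0: "precle Hom (fst ob) y0"
    using precle_trans[OF below IH(3)] .
  have "insert (fst ob) (?Int (path_obj ps)) \<subseteq> ?Int (fst ob)"
    using precle_refl[of "fst ob"] below_y0 precle_trans[OF below] by blast
  then have "card (insert (fst ob) (?Int (path_obj ps))) \<le> card (?Int (fst ob))"
    by (rule card_mono[OF finite_interval])
  moreover have "fst ob \<notin> ?Int (path_obj ps)"
    using not_above by blast
  ultimately have "Suc (card (?Int (path_obj ps))) \<le> card (?Int (fst ob))"
    using finite_interval[of "path_obj ps" y0] by simp
  then show ?case
    using IH ob below_y0 by (simp add: cmp_in_Hom)
qed

lemma finite_valid_paths: "finite {ps. valid_path ps \<and> length ps \<le> n}"
proof (induction n)
  case 0
  then show ?case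
    by (simp add: finite_subset[of _ "{[]}"])
next
  case (Suc n)
  let ?ext = "\<lambda>ps. (\<lambda>ob. ob # ps) ` lower (path_obj ps) (path_val ps)"
  have "{ps. valid_path ps \<and> length ps \<le> Suc n} \<subseteq> {[]} \<union> (\<Union>ps\<in>{ps. valid_path ps \<and> length ps \<le> n}. ?ext ps)"
  proof
    fix qs
    assume "qs \<in> {ps. valid_path ps \<and> length ps \<le> Suc n}"
    then show "qs \<in> {[]} \<union> (\<Union>ps\<in>{ps. valid_path ps \<and> length ps \<le> n}. ?ext ps)"
      by (cases qs) auto
  qed
  moreover have "finite ({[]} \<union> (\<Union>ps\<in>{ps. valid_path ps \<and> length ps \<le> n}. ?ext ps))"
    using Suc finite_lower valid_path_invariant by auto
  ultimately show ?case
    by (rule finite_subset)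
qed

lemma admissible_valid_paths: "admissible {ps. valid_path ps} path_obj (\<lambda>_. y0) path_mor"
proof (rule admissibleI)
  show "path_mor ps \<in> Hom (path_obj ps) y0" if "ps \<in> {ps. valid_path ps}" for ps
    using that valid_path_invariant by auto
  have "{ps \<in> {ps. valid_path ps}. path_obj ps = a \<and> y0 = b}
      \<subseteq> {ps. valid_path ps \<and> length ps \<le> card {z. precle Hom a z \<and> precle Hom z y0}}" for a b
    using valid_path_invariant by auto
  then show "finite {ps \<in> {ps. valid_path ps}. path_obj ps = a \<and> y0 = b}" for a b
    using finite_valid_paths by (rule finite_subset)
qed

definition path_extensions :: "(('o \<times> 'm) list \<times> ('o \<times> 'm)) set" where
  "path_extensions = {k. valid_path (fst k) \<and> snd k \<in> lower (path_obj (fst k)) (path_val (fst k))}"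

lemma cons_path_extensions: "(\<lambda>k. snd k # fst k) ` path_extensions = {ps. valid_path ps} - {[]}"
proof
  show "{ps. valid_path ps} - {[]} \<subseteq> (\<lambda>k. snd k # fst k) ` path_extensions"
  proof
    fix q
    assume "q \<in> {ps. valid_path ps} - {[]}"
    then show "q \<in> (\<lambda>k. snd k # fst k) ` path_extensions"
      unfolding path_extensions_def by (cases q) (auto intro: rev_image_eqI[of "(tl q, hd q)"])
  qed
qed (auto simp: path_extensions_def)

lemma finite_path_extensions: "finite {k \<in> path_extensions. fst (snd k) = a}"
proof -
  have "{k \<in> path_extensions. fst (snd k) = a}
      \<subseteq> (\<lambda>q. (tl q, hd q)) ` {ps \<in> {ps. valid_path ps}. path_obj ps = a \<and> y0 = y0}"
  proof
    fix k
    assume "k \<in> {k \<in> path_extensions. fst (snd k) = a}"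
    then have "snd k # fst k \<in> {ps \<in> {ps. valid_path ps}. path_obj ps = a \<and> y0 = y0}"
      by (auto simp: path_extensions_def)
    then show "k \<in> (\<lambda>q. (tl q, hd q)) ` {ps \<in> {ps. valid_path ps}. path_obj ps = a \<and> y0 = y0}"
      by (rule rev_image_eqI) simp
  qed
  then show ?thesis
    by (rule finite_subset) (intro finite_imageI admissible_finite[OF admissible_valid_paths])
qed

text \<open>The value at each path decomposes over the one-step extensions of the path, and
  contraassociativity regroups the resulting double sum as a sum over the extended paths.\<close>

lemma pi_valid_paths_nonempty:
  "\<pi> (fam sP {ps. valid_path ps} path_obj (\<lambda>_. y0) path_mor path_val)
   = \<pi> (fam sP ({ps. valid_path ps} - {[]}) path_obj (\<lambda>_. y0) path_mor path_val)"
proof -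
  let ?I = "{ps. valid_path ps}" and ?J = "\<lambda>ps. lower (path_obj ps) (path_val ps)"
  have D: "path_val ps \<in> D (path_obj ps)" if "ps \<in> ?I" for ps
    using that valid_path_invariant by auto
  have okJ: "admissible (?J ps) fst (\<lambda>_. path_obj ps) snd" if "ps \<in> ?I" for ps
    using finite_lower[OF D[OF that]] lower_below[OF D[OF that]] by (intro admissible_finite_set) auto
  have finK: "finite {k \<in> path_extensions. fst (snd k) = a \<and> y0 = b}" for a b
    by (rule finite_subset[OF _ finite_path_extensions[of a]]) auto
  have "\<pi> (fam sP ?I path_obj (\<lambda>_. y0) path_mor path_val)
      = \<pi> (fam sP ?I path_obj (\<lambda>_. y0) path_mor (\<lambda>ps. \<pi> (fam sP (?J ps) fst (\<lambda>_. path_obj ps) snd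
          (piece (path_obj ps) (path_val ps)))))"
    using D okJ finite_lower decompose[OF D]
    by (intro arg_cong[where f = \<pi>] fam_cong) (auto simp: pi_fam_finite)
  also have "\<dots> = \<pi> (fam sP path_extensions (\<lambda>k. fst (snd k)) (\<lambda>_. y0)
      (\<lambda>k. cmp (fst (snd k)) (path_obj (fst k)) y0 (path_mor (fst k)) (snd (snd k)))
      (\<lambda>k. piece (path_obj (fst k)) (path_val (fst k)) (snd k)))"
    by (rule pi_fam_assoc[OF admissible_valid_paths okJ _ finK])
      (auto simp: path_extensions_def)
  also have "\<dots> = \<pi> (fam sP ((\<lambda>k. snd k # fst k) ` path_extensions) path_obj (\<lambda>_. y0) path_mor path_val)"
    by (subst fam_reindex) (auto simp: inj_on_def comp_def)
  finally show ?thesis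
    unfolding cons_path_extensions .
qed

lemma root_eq_0: "d0 = 0"
proof -
  let ?I = "{ps. valid_path ps}"
  have ok: "admissible ((?I - {[]}) \<union> {[]}) path_obj (\<lambda>_. y0) path_mor"
    using admissible_valid_paths by (rule admissible_subset) auto
  have "fam sP ?I path_obj (\<lambda>_. y0) path_mor path_val
      = (\<lambda>c. fam sP (?I - {[]}) path_obj (\<lambda>_. y0) path_mor path_val c + fam sP {[]} path_obj (\<lambda>_. y0) path_mor path_val c)"
    using fam_union[OF ok] by (simp add: insert_absorb)
  moreover have "fam sP (?I - {[]}) path_obj (\<lambda>_. y0) path_mor path_val \<in> homC sM Hom sP"
    "fam sP {[]} path_obj (\<lambda>_. y0) path_mor path_val \<in> homC sM Hom sP"
    by (intro fam_in_homC admissible_subset[OF ok]; auto)+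
  ultimately have "\<pi> (fam sP ?I path_obj (\<lambda>_. y0) path_mor path_val)
      = \<pi> (fam sP (?I - {[]}) path_obj (\<lambda>_. y0) path_mor path_val) + \<pi> (fam sP {[]} path_obj (\<lambda>_. y0) path_mor path_val)"
    by (simp add: pi_add)
  then have "\<pi> (fam sP {[]} path_obj (\<lambda>_. y0) path_mor path_val) = 0"
    using pi_valid_paths_nonempty by simp
  moreover have "\<pi> (fam sP {[]} path_obj (\<lambda>_. y0) path_mor path_val) = d0"
    using proj_D[OF root] by (simp add: pi_fam_singleton proj_eq_act)
  ultimately show ?thesis
    by simp
qed

end

context contramod
begin

lemma nakayama:
  assumes proj_D: "\<And>y d. d \<in> D y \<Longrightarrow> proj y d = d"
    and step: "\<And>y d. d \<in> D y \<Longrightarrow> \<exists>Os ds. finite (Os :: ('o \<times> 'm) set) \<and>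
        (\<forall>ob\<in>Os. precl Hom (fst ob) y \<and> snd ob \<in> Hom (fst ob) y \<and> ds ob \<in> D (fst ob)) \<and>
        d = (\<Sum>ob\<in>Os. act (fst ob) y (snd ob) (ds ob))"
    and d0: "d0 \<in> D y0"
  shows "d0 = 0"
proof -
  define splits where "splits y d L \<longleftrightarrow> finite (fst L) \<and>
      (\<forall>ob\<in>fst L. precl Hom (fst ob) y \<and> snd ob \<in> Hom (fst ob) y \<and> snd L ob \<in> D (fst ob)) \<and>
      d = (\<Sum>ob\<in>fst L. act (fst ob) y (snd ob) (snd L ob))"
    for y d and L :: "('o \<times> 'm) set \<times> ('o \<times> 'm \<Rightarrow> 'p)"
  have "\<forall>yd. \<exists>L. snd yd \<in> D (fst yd) \<longrightarrow> splits (fst yd) (snd yd) L"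
  proof
    fix yd :: "'o \<times> 'p"
    show "\<exists>L. snd yd \<in> D (fst yd) \<longrightarrow> splits (fst yd) (snd yd) L"
    proof (cases "snd yd \<in> D (fst yd)")
      case True
      from step[OF True] obtain Os ds where "finite Os \<and>
          (\<forall>ob\<in>Os. precl Hom (fst ob) (fst yd) \<and> snd ob \<in> Hom (fst ob) (fst yd) \<and> ds ob \<in> D (fst ob)) \<and>
          snd yd = (\<Sum>ob\<in>Os. act (fst ob) (fst yd) (snd ob) (ds ob))"
        by (elim exE)
      then show ?thesis
        unfolding splits_def by (intro exI[of _ "(Os, ds)"]) simp
    qed simp
  qed
  then obtain F where F_all: "\<forall>yd. snd yd \<in> D (fst yd) \<longrightarrow> splits (fst yd) (snd yd) (F yd)"
    by (rule choice[THEN exE])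
  have F: "d \<in> D y \<Longrightarrow> splits y d (F (y, d))" for y d
    using F_all[rule_format, of "(y, d)"] by simp
  interpret descent sM Hom cmp idm sP \<pi> D "\<lambda>y d. fst (F (y, d))" "\<lambda>y d. snd (F (y, d))" y0 d0
    using proj_D F d0 unfolding splits_def by unfold_locales auto
  show ?thesis
    by (rule root_eq_0)
qed

end

section \<open>Faithfulness and fullness of \<open>\<Theta>\<close>\<close>

locale contramod_pair = P: contramod sM Hom cmp idm sP \<pi>P + Q: contramod sM Hom cmp idm sQ \<pi>Q
  for sM :: "'k::field \<Rightarrow> 'm::ab_group_add \<Rightarrow> 'm" and Hom :: "'o \<Rightarrow> 'o \<Rightarrow> 'm set"
    and cmp :: "'o \<Rightarrow> 'o \<Rightarrow> 'o \<Rightarrow> 'm \<Rightarrow> 'm \<Rightarrow> 'm" and idm :: "'o \<Rightarrow> 'm"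
    and sP :: "'k \<Rightarrow> 'p::ab_group_add \<Rightarrow> 'p" and \<pi>P :: "(('o \<Rightarrow> 'o \<Rightarrow> 'm \<Rightarrow> 'k) \<Rightarrow> 'p) \<Rightarrow> 'p"
    and sQ :: "'k \<Rightarrow> 'q::ab_group_add \<Rightarrow> 'q" and \<pi>Q :: "(('o \<Rightarrow> 'o \<Rightarrow> 'm \<Rightarrow> 'k) \<Rightarrow> 'q) \<Rightarrow> 'q"
begin

lemma contra_mor_expansion:
  assumes "contra_mor sM Hom sP \<pi>P sQ \<pi>Q g"
  shows "g p = \<pi>Q (Q.objfam (\<lambda>x. g (P.proj x p)))"
proof -
  have g: "(\<forall>p p'. g (p + p') = g p + g p') \<and> (\<forall>a p. g (sP a p) = sQ a (g p)) \<and>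
      (\<forall>f\<in>homC sM Hom sP. g (\<pi>P f) = \<pi>Q (g \<circ> f))"
    using assms unfolding contra_mor_def .
  then have "additive g" and scale: "\<And>a p. g (sP a p) = sQ a (g p)"
    and comm: "\<And>f. f \<in> homC sM Hom sP \<Longrightarrow> g (\<pi>P f) = \<pi>Q (g \<circ> f)"
    unfolding additive_def by simp_all
  have "g p = g (\<pi>P (P.objfam (\<lambda>x. P.proj x p)))"
    by (simp only: P.pi_objfam_proj)
  also have "\<dots> = \<pi>Q (g \<circ> P.objfam (\<lambda>x. P.proj x p))"
    by (rule comm[OF P.fam_in_homC[OF P.admissible_objects]])
  also have "\<dots> = \<pi>Q (Q.objfam (\<lambda>x. g (P.proj x p)))"
    by (subst P.fam_comp_linear[of g sP sQ]) (simp_all add: \<open>additive g\<close> scale)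
  finally show ?thesis .
qed

lemma contra_mor_eq_if_eq_on_Theta:
  assumes "contra_mor sM Hom sP \<pi>P sQ \<pi>Q g1" "contra_mor sM Hom sP \<pi>P sQ \<pi>Q g2"
    and "\<forall>x. \<forall>p\<in>P.Theta x. g1 p = g2 p"
  shows "g1 = g2"
proof
  fix p
  have "g1 p = \<pi>Q (Q.objfam (\<lambda>x. g1 (P.proj x p)))"
    by (rule contra_mor_expansion[OF assms(1)])
  also have "(\<lambda>x. g1 (P.proj x p)) = (\<lambda>x. g2 (P.proj x p))"
    using assms(3) P.proj_in_Theta by (intro ext) blast
  also have "\<pi>Q (Q.objfam (\<lambda>x. g2 (P.proj x p))) = g2 p"
    by (rule contra_mor_expansion[OF assms(2), symmetric])
  finally show "g1 p = g2 p" .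
qed

end

locale theta_morphism = contramod_pair sM Hom cmp idm sP \<pi>P sQ \<pi>Q
  for sM :: "'k::field \<Rightarrow> 'm::ab_group_add \<Rightarrow> 'm" and Hom :: "'o \<Rightarrow> 'o \<Rightarrow> 'm set"
    and cmp :: "'o \<Rightarrow> 'o \<Rightarrow> 'o \<Rightarrow> 'm \<Rightarrow> 'm \<Rightarrow> 'm" and idm :: "'o \<Rightarrow> 'm"
    and sP :: "'k \<Rightarrow> 'p::ab_group_add \<Rightarrow> 'p" and \<pi>P :: "(('o \<Rightarrow> 'o \<Rightarrow> 'm \<Rightarrow> 'k) \<Rightarrow> 'p) \<Rightarrow> 'p"
    and sQ :: "'k \<Rightarrow> 'q::ab_group_add \<Rightarrow> 'q" and \<pi>Q :: "(('o \<Rightarrow> 'o \<Rightarrow> 'm \<Rightarrow> 'k) \<Rightarrow> 'q) \<Rightarrow> 'q" +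
  fixes t :: "'o \<Rightarrow> 'p \<Rightarrow> 'q"
  assumes strictly_lf: "left_strictly_locally_finite sM Hom cmp"
    and module_mor_t: "module_mor Hom sP (Theta_obj sM Hom idm sP \<pi>P) (Theta_act sM Hom sP \<pi>P)
                                sQ (Theta_obj sM Hom idm sQ \<pi>Q) (Theta_act sM Hom sQ \<pi>Q) t"
begin

lemma t_in_Theta: "p \<in> P.Theta x \<Longrightarrow> t x p \<in> Q.Theta x"
  using module_mor_t by (simp add: module_mor_def)

lemma t_add: "p \<in> P.Theta x \<Longrightarrow> p' \<in> P.Theta x \<Longrightarrow> t x (p + p') = t x p + t x p'"
  using module_mor_t by (simp add: module_mor_def)

lemma t_scale: "p \<in> P.Theta x \<Longrightarrow> t x (sP a p) = sQ a (t x p)"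
  using module_mor_t by (simp add: module_mor_def)

lemma t_act: "p \<in> P.Theta x \<Longrightarrow> f \<in> Hom x y \<Longrightarrow> t y (P.act x y f p) = Q.act x y f (t x p)"
  using module_mor_t by (simp add: module_mor_def Theta_act_def)

lemma t_zero: "t x 0 = 0"
  using t_add[OF P.Theta_zero P.Theta_zero] by simp

lemma t_sum: "(\<And>s. s \<in> S \<Longrightarrow> v s \<in> P.Theta x) \<Longrightarrow> t x (\<Sum>s\<in>S. v s) = (\<Sum>s\<in>S. t x (v s))"
  by (induction S rule: infinite_finite_induct) (simp_all add: t_zero t_add P.Theta_sum)

lemma t_linear_combination:
  "(\<And>s. s \<in> S \<Longrightarrow> v s \<in> P.Theta x) \<Longrightarrow> t x (\<Sum>s\<in>S. sP (k s) (v s)) = (\<Sum>s\<in>S. sQ (k s) (t x (v s)))"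
  by (simp add: t_sum t_scale P.Theta_scale)

lemma t_pi_fam_finite:
  assumes fin: "finite I" and ok: "P.admissible I src (\<lambda>_. y) mor" and val: "\<And>i. i \<in> I \<Longrightarrow> val i \<in> P.Theta (src i)"
  shows "t y (\<pi>P (P.fam sP I src (\<lambda>_. y) mor val)) = \<pi>Q (P.fam sQ I src (\<lambda>_. y) mor (\<lambda>i. t (src i) (val i)))"
proof -
  have mor: "i \<in> I \<Longrightarrow> mor i \<in> Hom (src i) y" for i
    using P.admissible_Hom[OF ok] by simp
  have "t y (\<pi>P (P.fam sP I src (\<lambda>_. y) mor val)) = (\<Sum>i\<in>I. t y (P.act (src i) y (mor i) (val i)))"
    by (simp add: P.pi_fam_finite[OF fin ok] t_sum P.act_in_Theta mor)
  also have "\<dots> = \<pi>Q (P.fam sQ I src (\<lambda>_. y) mor (\<lambda>i. t (src i) (val i)))"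
    by (simp add: Q.pi_fam_finite[OF fin ok] t_act val mor)
  finally show ?thesis .
qed

definition Theta_family :: "'o \<Rightarrow> 'i set \<Rightarrow> ('i \<Rightarrow> 'o) \<Rightarrow> ('i \<Rightarrow> 'm) \<Rightarrow> ('i \<Rightarrow> 'p) \<Rightarrow> bool" where
  "Theta_family y I src mor val \<longleftrightarrow> P.admissible I src (\<lambda>_. y) mor \<and> (\<forall>i\<in>I. val i \<in> P.Theta (src i))"

definition defect :: "'o \<Rightarrow> 'i set \<Rightarrow> ('i \<Rightarrow> 'o) \<Rightarrow> ('i \<Rightarrow> 'm) \<Rightarrow> ('i \<Rightarrow> 'p) \<Rightarrow> 'q" where
  "defect y I src mor val =
     t y (\<pi>P (P.fam sP I src (\<lambda>_. y) mor val)) - \<pi>Q (P.fam sQ I src (\<lambda>_. y) mor (\<lambda>i. t (src i) (val i)))"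

text \<open>The index type is fixed to basis triples so that \<open>defects y\<close> is a set; by
  \<open>defect_in_defects\<close> it contains the defects of families over any index type.\<close>

definition defects :: "'o \<Rightarrow> 'q set" where
  "defects y = {defect y I src mor val | I src mor val.
     Theta_family y (I :: ('o \<times> 'o \<times> 'm) set) src mor val \<and> (\<forall>i\<in>I. precl Hom (src i) y)}"

lemma Theta_family_subset: "Theta_family y I src mor val \<Longrightarrow> J \<subseteq> I \<Longrightarrow> Theta_family y J src mor val"
  unfolding Theta_family_def using P.admissible_subset by blast

lemma defect_in_Theta:
  assumes "Theta_family y I src mor val"
  shows "defect y I src mor val \<in> Q.Theta y"
proof -
  have ok: "P.admissible I src (\<lambda>_. y) mor"
    using assms unfolding Theta_family_def by blast
  show ?thesis
    unfolding defect_def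
    using t_in_Theta[OF P.pi_fam_in_Theta[OF ok]] Q.pi_fam_in_Theta[OF ok] by (blast intro: Q.Theta_diff)
qed

lemma defect_finite: "Theta_family y I src mor val \<Longrightarrow> finite I \<Longrightarrow> defect y I src mor val = 0"
  unfolding defect_def Theta_family_def by (simp add: t_pi_fam_finite)

lemma defect_union:
  assumes fam: "Theta_family y (I1 \<union> I2) src mor val" and dis: "I1 \<inter> I2 = {}"
  shows "defect y (I1 \<union> I2) src mor val = defect y I1 src mor val + defect y I2 src mor val"
proof -
  have ok: "P.admissible (I1 \<union> I2) src (\<lambda>_. y) mor"
    using fam unfolding Theta_family_def by blast
  have fam12: "Theta_family y I1 src mor val" "Theta_family y I2 src mor val"
    using Theta_family_subset[OF fam] by auto
  then have ok12: "P.admissible I1 src (\<lambda>_. y) mor" "P.admissible I2 src (\<lambda>_. y) mor"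
    unfolding Theta_family_def by blast+
  have "\<pi>P (P.fam sP (I1 \<union> I2) src (\<lambda>_. y) mor val)
      = \<pi>P (P.fam sP I1 src (\<lambda>_. y) mor val) + \<pi>P (P.fam sP I2 src (\<lambda>_. y) mor val)"
    unfolding P.fam_union[OF ok dis] using ok12 by (intro P.pi_add P.fam_in_homC)
  moreover have "\<pi>Q (P.fam sQ (I1 \<union> I2) src (\<lambda>_. y) mor (\<lambda>i. t (src i) (val i)))
      = \<pi>Q (P.fam sQ I1 src (\<lambda>_. y) mor (\<lambda>i. t (src i) (val i))) + \<pi>Q (P.fam sQ I2 src (\<lambda>_. y) mor (\<lambda>i. t (src i) (val i)))"
    unfolding P.fam_union[OF ok dis] using ok12 by (intro Q.pi_add Q.fam_in_homC)
  moreover have "t y (\<pi>P (P.fam sP I1 src (\<lambda>_. y) mor val) + \<pi>P (P.fam sP I2 src (\<lambda>_. y) mor val))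
      = t y (\<pi>P (P.fam sP I1 src (\<lambda>_. y) mor val)) + t y (\<pi>P (P.fam sP I2 src (\<lambda>_. y) mor val))"
    using ok12 by (intro t_add P.pi_fam_in_Theta) auto
  ultimately show ?thesis
    unfolding defect_def by simp
qed

text \<open>A nonzero morphism into \<open>y\<close> whose source is not strictly lower has its source in the finite
  interval between \<open>y\<close> and itself, so those terms form a finite family.\<close>

lemma defect_strictly_lower:
  assumes fam: "Theta_family y I src mor val"
  shows "defect y I src mor val = defect y {i\<in>I. mor i \<noteq> 0 \<and> precl Hom (src i) y} src mor val"
proof -
  have ok: "P.admissible I src (\<lambda>_. y) mor"
    using fam unfolding Theta_family_def by blast
  let ?N = "{i\<in>I. mor i \<noteq> 0}" and ?L = "{i\<in>I. mor i \<noteq> 0 \<and> precl Hom (src i) y}"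
    and ?H = "{i\<in>I. mor i \<noteq> 0 \<and> \<not> precl Hom (src i) y}"
  have "?H \<subseteq> (\<Union>a\<in>{z. precle Hom y z \<and> precle Hom z y}. {i\<in>I. src i = a \<and> y = y})"
    using P.admissible_Hom[OF ok] P.precle_if_nonzero unfolding precl_def by fastforce
  then have finH: "finite ?H"
    by (rule finite_subset) (use P.finite_interval P.admissible_finite[OF ok] in blast)
  have "P.fam sP I src (\<lambda>_. y) mor val = P.fam sP ?N src (\<lambda>_. y) mor val"
    "P.fam sQ I src (\<lambda>_. y) mor (\<lambda>i. t (src i) (val i)) = P.fam sQ ?N src (\<lambda>_. y) mor (\<lambda>i. t (src i) (val i))"
    by (rule P.fam_restrict[OF ok] Q.fam_restrict[OF ok]; auto)+
  then have "defect y I src mor val = defect y ?N src mor val"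
    unfolding defect_def by simp
  also have "\<dots> = defect y (?H \<union> ?L) src mor val"
    by (rule arg_cong[where f = "\<lambda>S. defect y S src mor val"]) auto
  also have "\<dots> = defect y ?H src mor val + defect y ?L src mor val"
    by (rule defect_union) (auto intro: Theta_family_subset[OF fam])
  also have "defect y ?H src mor val = 0"
    using finH by (intro defect_finite Theta_family_subset[OF fam]) auto
  finally show ?thesis
    by simp
qed

lemma defect_in_defects:
  assumes fam: "Theta_family y (J :: 'j set) srcJ morJ valJ"
  shows "defect y J srcJ morJ valJ \<in> defects y"
proof -
  have okJ: "P.admissible J srcJ (\<lambda>_. y) morJ" and valJ: "\<And>j. j \<in> J \<Longrightarrow> valJ j \<in> P.Theta (srcJ j)"
    using fam unfolding Theta_family_def by auto
  define val where "val i = (\<Sum>j\<in>{j\<in>J. srcJ j = fst i}. sP (P.coord (fst i) y (snd (snd i)) (morJ j)) (valJ j))"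
    for i :: "'o \<times> 'o \<times> 'm"
  let ?L = "{i\<in>P.basis_triples_into y. snd (snd i) \<noteq> 0 \<and> precl Hom (fst i) y}"
  have famB: "Theta_family y (P.basis_triples_into y) fst (\<lambda>i. snd (snd i)) val"
    unfolding Theta_family_def val_def using P.admissible_basis_triples_into valJ
    by (auto intro!: P.Theta_sum P.Theta_scale)
  have "P.fam sP (P.basis_triples_into y) fst (\<lambda>_. y) (\<lambda>i. snd (snd i)) val = P.fam sP J srcJ (\<lambda>_. y) morJ valJ"
    unfolding val_def using P.fam_rebase[OF P.vector_space_sR okJ, where V = "\<lambda>_. UNIV" and L = "\<lambda>_ p. p"] by simp
  moreover have "P.fam sQ (P.basis_triples_into y) fst (\<lambda>_. y) (\<lambda>i. snd (snd i)) (\<lambda>i. t (fst i) (val i))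
      = P.fam sQ J srcJ (\<lambda>_. y) morJ (\<lambda>j. t (srcJ j) (valJ j))"
    unfolding val_def
    by (rule P.fam_rebase[OF Q.vector_space_sR okJ, where V = P.Theta]) (auto intro: valJ t_linear_combination)
  ultimately have "defect y J srcJ morJ valJ = defect y (P.basis_triples_into y) fst (\<lambda>i. snd (snd i)) val"
    unfolding defect_def by simp
  also have "\<dots> = defect y ?L fst (\<lambda>i. snd (snd i)) val"
    by (rule defect_strictly_lower[OF famB])
  moreover have "Theta_family y ?L fst (\<lambda>i. snd (snd i)) val"
    by (rule Theta_family_subset[OF famB]) auto
  ultimately show ?thesis
    unfolding defects_def mem_Collect_eq
    by (intro exI[of _ ?L] exI[of _ fst] exI[of _ "\<lambda>i. snd (snd i)"] exI[of _ val]) simp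
qed

end

context theta_morphism
begin

lemma defect_factor:
  assumes okI: "P.admissible I src (\<lambda>_. y) mor" and val: "\<And>i. i \<in> I \<Longrightarrow> val i \<in> P.Theta (src i)"
    and fin: "finite Os" and Os: "\<And>ob. ob \<in> Os \<Longrightarrow> snd ob \<in> Hom (fst ob) y"
    and morJ: "\<And>ob i. ob \<in> Os \<Longrightarrow> i \<in> I \<Longrightarrow> morJ ob i \<in> Hom (src i) (fst ob)"
    and split: "\<And>i. i \<in> I \<Longrightarrow> mor i = (\<Sum>ob\<in>Os. cmp (src i) (fst ob) y (snd ob) (morJ ob i))"
  shows "defect y I src mor val = (\<Sum>ob\<in>Os. Q.act (fst ob) y (snd ob) (defect (fst ob) I src (morJ ob) val))"
proof -
  have "P.admissible I src (\<lambda>_. fst ob) (morJ ob)" if "ob \<in> Os" for ob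
    using okI by (rule P.admissible_retarget) (rule morJ[OF that])
  then have "\<pi>P (P.fam sP I src (\<lambda>_. fst ob) (morJ ob) val) \<in> P.Theta (fst ob)" if "ob \<in> Os" for ob
    using that by (intro P.pi_fam_in_Theta) auto
  then have "t y (\<pi>P (P.fam sP I src (\<lambda>_. y) mor val))
      = (\<Sum>ob\<in>Os. Q.act (fst ob) y (snd ob) (t (fst ob) (\<pi>P (P.fam sP I src (\<lambda>_. fst ob) (morJ ob) val))))"
    using Os by (simp add: P.pi_fam_factor[OF okI fin Os morJ split] t_sum t_act P.act_in_Theta)
  moreover have "\<pi>Q (P.fam sQ I src (\<lambda>_. y) mor (\<lambda>i. t (src i) (val i)))
      = (\<Sum>ob\<in>Os. Q.act (fst ob) y (snd ob) (\<pi>Q (P.fam sQ I src (\<lambda>_. fst ob) (morJ ob) (\<lambda>i. t (src i) (val i)))))"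
    by (rule Q.pi_fam_factor[OF okI fin Os morJ split])
  ultimately show ?thesis
    unfolding defect_def by (simp add: Q.act_diff sum_subtractf)
qed

lemma defect_descends:
  assumes "d \<in> defects y"
  shows "\<exists>Os ds. finite (Os :: ('o \<times> 'm) set) \<and>
    (\<forall>ob\<in>Os. precl Hom (fst ob) y \<and> snd ob \<in> Hom (fst ob) y \<and> ds ob \<in> defects (fst ob)) \<and>
    d = (\<Sum>ob\<in>Os. Q.act (fst ob) y (snd ob) (ds ob))"
proof -
  obtain I :: "('o \<times> 'o \<times> 'm) set" and src mor val where fam: "Theta_family y I src mor val"
    and lower: "\<forall>i\<in>I. precl Hom (src i) y" and d: "d = defect y I src mor val"
    using assms unfolding defects_def by blast
  have okI: "P.admissible I src (\<lambda>_. y) mor" and val: "\<And>i. i \<in> I \<Longrightarrow> val i \<in> P.Theta (src i)"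
    using fam unfolding Theta_family_def by auto
  obtain Os :: "('o \<times> 'm) set" where fin: "finite Os"
    and Os: "\<And>ob. ob \<in> Os \<Longrightarrow> precl Hom (fst ob) y \<and> snd ob \<in> Hom (fst ob) y"
    and factor: "\<And>z f. precl Hom z y \<Longrightarrow> f \<in> Hom z y \<Longrightarrow>
      \<exists>G. (\<forall>ob\<in>Os. G ob \<in> Hom z (fst ob)) \<and> f = (\<Sum>ob\<in>Os. cmp z (fst ob) y (snd ob) (G ob))"
    using P.lower_factorization[OF strictly_lf, where y = y] by blast
  have "\<forall>i\<in>I. \<exists>G. (\<forall>ob\<in>Os. G ob \<in> Hom (src i) (fst ob)) \<and> mor i = (\<Sum>ob\<in>Os. cmp (src i) (fst ob) y (snd ob) (G ob))"
    using factor lower P.admissible_Hom[OF okI] by simp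
  then obtain G where G: "\<And>ob i. ob \<in> Os \<Longrightarrow> i \<in> I \<Longrightarrow> G i ob \<in> Hom (src i) (fst ob)"
    and split: "\<And>i. i \<in> I \<Longrightarrow> mor i = (\<Sum>ob\<in>Os. cmp (src i) (fst ob) y (snd ob) (G i ob))"
    by (metis bchoice)
  define ds where "ds ob = defect (fst ob) I src (\<lambda>i. G i ob) val" for ob
  have "Theta_family (fst ob) I src (\<lambda>i. G i ob) val" if "ob \<in> Os" for ob
    unfolding Theta_family_def using P.admissible_retarget[OF okI G[OF that]] val by blast
  then have "\<forall>ob\<in>Os. precl Hom (fst ob) y \<and> snd ob \<in> Hom (fst ob) y \<and> ds ob \<in> defects (fst ob)"
    using Os by (simp add: ds_def defect_in_defects)
  moreover have "d = (\<Sum>ob\<in>Os. Q.act (fst ob) y (snd ob) (ds ob))"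
    unfolding d ds_def using okI val fin Os G split by (intro defect_factor) auto
  ultimately show ?thesis
    using fin by (intro exI[of _ Os] exI[of _ ds] conjI)
qed

lemma t_pi_fam:
  assumes "Theta_family y J src mor val"
  shows "t y (\<pi>P (P.fam sP J src (\<lambda>_. y) mor val)) = \<pi>Q (P.fam sQ J src (\<lambda>_. y) mor (\<lambda>j. t (src j) (val j)))"
proof -
  have "defect y J src mor val = 0"
  proof (rule Q.nakayama[where D = defects])
    show "defect y J src mor val \<in> defects y"
      by (rule defect_in_defects[OF assms])
    show "Q.proj y d = d" if "d \<in> defects y" for y d
      using that defect_in_Theta Q.Theta_obj_iff unfolding defects_def by blast
  qed (rule defect_descends)
  then show ?thesis
    unfolding defect_def by simp
qed

subsection \<open>Extending a module morphism to the contramodules\<close>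

definition t_ext :: "'p \<Rightarrow> 'q" where
  "t_ext p = \<pi>Q (Q.objfam (\<lambda>x. t x (P.proj x p)))"

lemma t_ext_add: "t_ext (p + p') = t_ext p + t_ext p'"
proof -
  have "(\<lambda>x. t x (P.proj x (p + p'))) = (\<lambda>x. t x (P.proj x p) + t x (P.proj x p'))"
    by (simp add: P.proj_add t_add P.proj_in_Theta)
  then show ?thesis
    unfolding t_ext_def by (simp add: Q.fam_add_vals Q.pi_add Q.fam_in_homC Q.admissible_objects)
qed

lemma t_ext_scale: "t_ext (sP a p) = sQ a (t_ext p)"
proof -
  have "(\<lambda>x. t x (P.proj x (sP a p))) = (\<lambda>x. sQ a (t x (P.proj x p)))"
    by (simp add: P.proj_scale t_scale P.proj_in_Theta)
  then show ?thesis
    unfolding t_ext_def by (simp add: Q.fam_scale_vals Q.pi_scale Q.fam_in_homC Q.admissible_objects)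
qed

lemma t_ext_extends:
  assumes p: "p \<in> P.Theta x"
  shows "t_ext p = t x p"
proof -
  have proj_p: "P.proj x p = p"
    using p P.Theta_obj_iff by blast
  have "P.proj z p = 0" if "z \<noteq> x" for z
  proof -
    have "P.proj z p = P.proj z (P.proj x p)"
      by (simp only: proj_p)
    also have "\<dots> = 0"
      using P.act_act[OF P.idm_in_Hom[of x] P.idm_in_Hom[of z]] that by (simp add: P.proj_eq_act)
    finally show ?thesis .
  qed
  then have "Q.objfam (\<lambda>z. t z (P.proj z p)) = P.fam sQ {x} (\<lambda>z. z) (\<lambda>z. z) idm (\<lambda>z. t z (P.proj z p))"
    by (intro Q.fam_restrict Q.admissible_objects) (auto simp: t_zero)
  then have "t_ext p = Q.act x x (idm x) (t x p)"
    unfolding t_ext_def by (simp add: Q.pi_fam_singleton proj_p)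
  then show ?thesis
    using t_in_Theta[OF p] Q.Theta_obj_iff Q.proj_eq_act by metis
qed

lemma t_ext_pi:
  assumes f: "f \<in> homC sM Hom sP"
  shows "t_ext (\<pi>P f) = \<pi>Q (t_ext \<circ> f)"
proof -
  let ?B = "P.basis_triples" and ?tgt = "\<lambda>i::'o \<times> 'o \<times> 'm. fst (snd i)" and ?mor = "\<lambda>i::'o \<times> 'o \<times> 'm. snd (snd i)"
  define fv where "fv i = f (cdelta (fst i) (?tgt i) (P.coord (fst i) (?tgt i) (?mor i)))" for i
  let ?v = "\<lambda>i. P.proj (fst i) (fv i)"
  have f_eq: "f = P.fam sP ?B fst ?tgt ?mor fv"
    unfolding fv_def by (rule P.homC_eq_fam[OF f])
  have ok: "P.admissible ?B fst ?tgt ?mor"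
    by (rule P.admissible_basis_triples)
  have ok_into: "P.admissible {i\<in>?B. ?tgt i = y} fst (\<lambda>_. y) ?mor" for y
  proof (rule P.admissibleI)
    show "finite {i \<in> {i\<in>?B. ?tgt i = y}. fst i = a \<and> y = b}" for a b
      by (rule finite_subset[OF _ P.admissible_finite[OF ok, of a y]]) auto
  qed (use P.admissible_Hom[OF ok] in auto)
  have "t y (P.proj y (\<pi>P f)) = \<pi>Q (P.fam sQ {i\<in>?B. ?tgt i = y} fst (\<lambda>_. y) ?mor (\<lambda>i. t (fst i) (?v i)))" for y
  proof -
    have "P.proj y (\<pi>P f) = \<pi>P (P.fam sP {i\<in>?B. ?tgt i = y} fst (\<lambda>_. y) ?mor fv)"
      unfolding f_eq P.proj_pi_fam[OF ok] by (intro arg_cong[where f = \<pi>P] P.fam_cong) auto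
    also have "\<dots> = \<pi>P (P.fam sP {i\<in>?B. ?tgt i = y} fst (\<lambda>_. y) ?mor ?v)"
      by (rule P.pi_fam_proj_vals[OF ok_into, symmetric])
    finally show ?thesis
      using ok_into P.proj_in_Theta by (simp add: t_pi_fam Theta_family_def)
  qed
  then have "t_ext (\<pi>P f) = \<pi>Q (P.fam sQ ?B fst ?tgt ?mor (\<lambda>i. t (fst i) (?v i)))"
    unfolding t_ext_def by (simp add: Q.pi_objfam_collect[OF ok])
  also have "\<dots> = \<pi>Q (P.fam sQ ?B fst ?tgt ?mor (\<lambda>i. t_ext (fv i)))"
    unfolding t_ext_def by (rule Q.pi_fam_pi_objfam[OF ok, symmetric])
  also have "\<dots> = \<pi>Q (t_ext \<circ> f)"
  proof -
    have "t_ext \<circ> f = t_ext \<circ> P.fam sP ?B fst ?tgt ?mor fv"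
      using f_eq by (rule arg_cong)
    also have "\<dots> = P.fam sQ ?B fst ?tgt ?mor (\<lambda>i. t_ext (fv i))"
      by (subst P.fam_comp_linear[of t_ext sP sQ]) (simp_all add: additive_def t_ext_add t_ext_scale)
    finally show ?thesis
      by simp
  qed
  finally show ?thesis .
qed

lemma contra_mor_t_ext: "contra_mor sM Hom sP \<pi>P sQ \<pi>Q t_ext"
  unfolding contra_mor_def using t_ext_add t_ext_scale t_ext_pi by blast

end

theorem theorem3p7:
  fixes sM :: "'k::field \<Rightarrow> 'm::ab_group_add \<Rightarrow> 'm"
    and Hom :: "'o \<Rightarrow> 'o \<Rightarrow> 'm set"
    and cmp :: "'o \<Rightarrow> 'o \<Rightarrow> 'o \<Rightarrow> 'm \<Rightarrow> 'm \<Rightarrow> 'm"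
    and idm :: "'o \<Rightarrow> 'm"
    and sP :: "'k \<Rightarrow> 'p::ab_group_add \<Rightarrow> 'p"
    and \<pi>P :: "(('o \<Rightarrow> 'o \<Rightarrow> 'm \<Rightarrow> 'k) \<Rightarrow> 'p) \<Rightarrow> 'p"
    and sQ :: "'k \<Rightarrow> 'q::ab_group_add \<Rightarrow> 'q"
    and \<pi>Q :: "(('o \<Rightarrow> 'o \<Rightarrow> 'm \<Rightarrow> 'k) \<Rightarrow> 'q) \<Rightarrow> 'q"
  assumes "klin_cat sM Hom cmp idm"
    and "left_strictly_locally_finite sM Hom cmp"
    and "contramodule sM Hom cmp idm sP \<pi>P"
    and "contramodule sM Hom cmp idm sQ \<pi>Q"
  shows "(\<forall>g1 g2. contra_mor sM Hom sP \<pi>P sQ \<pi>Q g1 \<longrightarrow> contra_mor sM Hom sP \<pi>P sQ \<pi>Q g2 \<longrightarrow>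
            (\<forall>x. \<forall>p\<in>Theta_obj sM Hom idm sP \<pi>P x. g1 p = g2 p) \<longrightarrow> g1 = g2)
       \<and> (\<forall>t. module_mor Hom sP (Theta_obj sM Hom idm sP \<pi>P) (Theta_act sM Hom sP \<pi>P)
                              sQ (Theta_obj sM Hom idm sQ \<pi>Q) (Theta_act sM Hom sQ \<pi>Q) t \<longrightarrow>
            (\<exists>g. contra_mor sM Hom sP \<pi>P sQ \<pi>Q g \<and>
                 (\<forall>x. \<forall>p\<in>Theta_obj sM Hom idm sP \<pi>P x. g p = t x p)))"
proof -
  have "locally_finite sM Hom"
    using assms(2) unfolding left_strictly_locally_finite_def by blast
  then interpret contramod_pair sM Hom cmp idm sP \<pi>P sQ \<pi>Q
    using assms(1,3,4) contramodule_vector_space[OF assms(3)] contramodule_vector_space[OF assms(4)]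
    by (simp add: contramod_pair_def contramod_def contramod_axioms_def kcategory_space_def kcategory_space_axioms_def kcategory_def)
  show ?thesis
  proof (intro conjI allI impI)
    show "g1 = g2" if "contra_mor sM Hom sP \<pi>P sQ \<pi>Q g1" "contra_mor sM Hom sP \<pi>P sQ \<pi>Q g2"
      and "\<forall>x. \<forall>p\<in>Theta_obj sM Hom idm sP \<pi>P x. g1 p = g2 p" for g1 g2
      using that by (rule contra_mor_eq_if_eq_on_Theta)
  next
    fix t
    assume "module_mor Hom sP (Theta_obj sM Hom idm sP \<pi>P) (Theta_act sM Hom sP \<pi>P)
                           sQ (Theta_obj sM Hom idm sQ \<pi>Q) (Theta_act sM Hom sQ \<pi>Q) t"
    then interpret theta_morphism sM Hom cmp idm sP \<pi>P sQ \<pi>Q t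
      using assms(2) contramod_pair_axioms by (simp add: theta_morphism_def theta_morphism_axioms_def)
    show "\<exists>g. contra_mor sM Hom sP \<pi>P sQ \<pi>Q g \<and> (\<forall>x. \<forall>p\<in>Theta_obj sM Hom idm sP \<pi>P x. g p = t x p)"
      using contra_mor_t_ext t_ext_extends by blast
  qed
qed

end
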